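(* Let $\lambda\in(0,1)$ and $T\ge0$. Then $$\|\tilde V^1_\lambda-\tilde V^1_{\lambda,T+1}\|_{\sup}\le(1-\lambda)\|\tilde V^1_\lambda-\tilde V^1_{\lambda,T}\|_{\sup},\qquad \|\tilde V^2_\lambda-\tilde V^2_{\lambda,T+1}\|_{\sup}\le(1-\lambda)\|\tilde V^2_\lambda-\tilde V^2_{\lambda,T}\|_{\sup}.$$
   Context: Setting: nonempty finite type sets $K,L$, action sets $A,B$, payoff $M:K\times L\times A\times B\to\mathbb R$; players choose actions simultaneously each stage, actions are publicly announced, strategies may depend on own type and both action histories. Discounted type-1 dual game $\tilde\Gamma^1_\lambda(\mu,q)$ ($\mu\in\mathbb R^{|K|}$, $q\in\Delta(L)$): player 1 chooses his own type $k$ (by a distribution of his choice, unknown to player 2), nature draws $l\sim q$ and tells only player 2, infinitely many stages are played, and player 1 (maximizer) receives $\mathbb E[\mu^k+\sum_{t\ge1}\lambda(1-\lambda)^{t-1}M(k,l,a_t,b_t)]$; value $\tilde V^1_\lambda(\mu,q)$. Discounted type-2 dual game $\tilde\Gamma^2_\lambda(p,\nu)$ ($p\in\Delta(K)$, $\nu\in\mathbb R^{|L|}$): $k\sim p$ drawn by nature and told to player 1, player 2 chooses $l$ himself, payoff $\mathbb E[\nu^l+\sum_{t\ge1}\lambda(1-\lambda)^{t-1}M]$; value $\tilde V^2_\lambda(p,\nu)$. The truncated versions $\tilde\Gamma^1_{\lambda,T},\tilde\Gamma^2_{\lambda,T}$ are the same games with the sum over $t=1,\dots,T$ only; values $\tilde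 V^1_{\lambda,T}(\mu,q)$, $\tilde V^2_{\lambda,T}(p,\nu)$, with $\tilde V^1_{\lambda,0}(\mu,q)=\max_k\mu^k$ and $\tilde V^2_{\lambda,0}(p,\nu)=\min_l\nu^l$. $\|f\|_{\sup}=\sup_{x}|f(x)|$ over the domain ($\mathbb R^{|K|}\times\Delta(L)$, resp. $\Delta(K)\times\mathbb R^{|L|}$). *)

theory Defs
  imports "HOL-Probability.Probability_Mass_Function"
begin

text \<open>Finite histories of the repeated game: lists of (action of player 1, action of player 2).
  A behaviour strategy of a player of a fixed type maps each history to a mixed action.\<close>

definition hist_prob :: "(('a \<times> 'b) list \<Rightarrow> 'a pmf) \<Rightarrow> (('a \<times> 'b) list \<Rightarrow> 'b pmf) \<Rightarrow> ('a \<times> 'b) list \<Rightarrow> real" where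
  "hist_prob s t h = (\<Prod>i<length h. pmf (s (take i h)) (fst (h ! i)) * pmf (t (take i h)) (snd (h ! i)))"

text \<open>Expected payoff at stage n+1 (n = length of the preceding history).\<close>
definition stage_payoff :: "('a::finite \<Rightarrow> 'b::finite \<Rightarrow> real) \<Rightarrow> (('a \<times> 'b) list \<Rightarrow> 'a pmf) \<Rightarrow> (('a \<times> 'b) list \<Rightarrow> 'b pmf) \<Rightarrow> nat \<Rightarrow> real" where
  "stage_payoff g s t n =
     (\<Sum>h\<in>{h. length h = n}. hist_prob s t h *
        (\<Sum>a\<in>UNIV. \<Sum>b\<in>UNIV. pmf (s h) a * pmf (t h) b * g a b))"

definition disc_total :: "real \<Rightarrow> (nat \<Rightarrow> real) \<Rightarrow> real" where
  "disc_total lam f = (\<Sum>n. lam * (1 - lam) ^ n * f n)"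

definition trunc_total :: "real \<Rightarrow> nat \<Rightarrow> (nat \<Rightarrow> real) \<Rightarrow> real" where
  "trunc_total lam T f = (\<Sum>n<T. lam * (1 - lam) ^ n * f n)"

text \<open>Type-1 dual game: player 1 picks pi in Delta(K) and sigma; nature draws l ~ q (told to 2).\<close>
definition dual1_payoff ::
  "((nat \<Rightarrow> real) \<Rightarrow> real) \<Rightarrow> ('k::finite \<Rightarrow> 'l::finite \<Rightarrow> 'a::finite \<Rightarrow> 'b::finite \<Rightarrow> real)
   \<Rightarrow> ('k \<Rightarrow> real) \<Rightarrow> 'l pmf \<Rightarrow> 'k pmf \<Rightarrow> ('k \<Rightarrow> ('a \<times> 'b) list \<Rightarrow> 'a pmf)
   \<Rightarrow> ('l \<Rightarrow> ('a \<times> 'b) list \<Rightarrow> 'b pmf) \<Rightarrow> real" where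
  "dual1_payoff W M \<mu> q \<pi> \<sigma> \<tau> =
     (\<Sum>k\<in>UNIV. pmf \<pi> k * (\<mu> k + (\<Sum>l\<in>UNIV. pmf q l * W (stage_payoff (M k l) (\<sigma> k) (\<tau> l)))))"

definition dual1_val where
  "dual1_val W M \<mu> q = (SUP (\<pi>, \<sigma>)\<in>UNIV. INF \<tau>\<in>UNIV. dual1_payoff W M \<mu> q \<pi> \<sigma> \<tau>)"

definition V1 where "V1 lam M \<mu> q = dual1_val (disc_total lam) M \<mu> q"
definition V1T where "V1T lam T M \<mu> q = dual1_val (trunc_total lam T) M \<mu> q"

text \<open>Type-2 dual game: k ~ p told to player 1; player 2 picks rho in Delta(L) and tau.\<close>
definition dual2_payoff ::
  "((nat \<Rightarrow> real) \<Rightarrow> real) \<Rightarrow> ('k::finite \<Rightarrow> 'l::finite \<Rightarrow> 'a::finite \<Rightarrow> 'b::finite \<Rightarrow> real)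
   \<Rightarrow> 'k pmf \<Rightarrow> ('l \<Rightarrow> real) \<Rightarrow> ('k \<Rightarrow> ('a \<times> 'b) list \<Rightarrow> 'a pmf)
   \<Rightarrow> 'l pmf \<Rightarrow> ('l \<Rightarrow> ('a \<times> 'b) list \<Rightarrow> 'b pmf) \<Rightarrow> real" where
  "dual2_payoff W M p \<nu> \<sigma> \<rho> \<tau> =
     (\<Sum>l\<in>UNIV. pmf \<rho> l * (\<nu> l + (\<Sum>k\<in>UNIV. pmf p k * W (stage_payoff (M k l) (\<sigma> k) (\<tau> l)))))"

definition dual2_val where
  "dual2_val W M p \<nu> = (SUP \<sigma>\<in>UNIV. INF (\<rho>, \<tau>)\<in>UNIV. dual2_payoff W M p \<nu> \<sigma> \<rho> \<tau>)"

definition V2 where "V2 lam M p \<nu> = dual2_val (disc_total lam) M p \<nu>"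
definition V2T where "V2T lam T M p \<nu> = dual2_val (trunc_total lam T) M p \<nu>"

definition supnorm :: "('x \<Rightarrow> 'y \<Rightarrow> real) \<Rightarrow> real" where
  "supnorm f = (SUP (x, y)\<in>UNIV. \<bar>f x y\<bar>)"

end

(*
  Both dual values are suprema, over player 1's strategies, of what he guarantees against each
  type of player 2; so they are governed by the guaranteed payoff vectors.  If every vector that
  can be guaranteed under the evaluation U can be guaranteed under U' up to e, then the same holds
  for W = lam * (first stage) + (1 - lam) * (U of the continuation) versus the analogous W', up to
  (1 - lam) * e: play the same first stage and then the continuation strategies provided by the
  hypothesis.  Conversely, a bound e on the difference of the dual values under U and U' gives
  this approximation of guaranteed vectors by a separation argument: the set of guaranteed vectors
  is convex (Kuhn's theorem lets player 1 mix behaviour strategies), and a functional separating a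
  point from it is a parameter (mu, q) resp. (p, nu) of a dual game.  The discounted evaluation
  satisfies the recursion with itself, the (T+1)-stage truncation with the T-stage one.
*)
theory Submission
  imports Defs "HOL-Analysis.Analysis"
begin

section \<open>Behaviour strategies and stage payoffs\<close>

lemma sum_pmf_UNIV [simp]: "(\<Sum>x\<in>(UNIV::'x::finite set). pmf p x) = 1"
  by (rule sum_pmf_eq_1) auto

lemma pmf_embed_pmf_finite:
  fixes f :: "'x::finite \<Rightarrow> real"
  assumes nonneg: "\<And>x. 0 \<le> f x" and sum1: "sum f UNIV = 1"
  shows "pmf (embed_pmf f) = f"
proof -
  have "(\<integral>\<^sup>+x. ennreal (f x) \<partial>count_space UNIV) = ennreal (sum f UNIV)"
    using nonneg by (simp add: nn_integral_count_space_finite sum_ennreal)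
  then show ?thesis
    using pmf_embed_pmf[of f] nonneg sum1 by auto
qed

lemma sum_UNIV_prod:
  "(\<Sum>x\<in>(UNIV::('a::finite \<times> 'b::finite) set). F x) = (\<Sum>a\<in>UNIV. \<Sum>b\<in>UNIV. F (a, b))"
  by (simp add: sum.cartesian_product UNIV_Times_UNIV[symmetric] del: UNIV_Times_UNIV)

lemma sum_pmf_product:
  "(\<Sum>x\<in>(UNIV::('a::finite \<times> 'b::finite) set). pmf p (fst x) * pmf q (snd x)) = 1"
  by (simp add: sum_UNIV_prod sum_product[symmetric])

lemma sum_pmf_snd: "(\<Sum>x\<in>(UNIV::('a::finite \<times> 'b::finite) set). pmf q (snd x)) = real CARD('a)"
  by (simp add: sum_UNIV_prod)

lemma abs_expectation_product_le:
  fixes f :: "'a::finite \<times> 'b::finite \<Rightarrow> real"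
  assumes "\<And>x. \<bar>f x\<bar> \<le> C"
  shows "\<bar>\<Sum>x\<in>UNIV. pmf p (fst x) * pmf q (snd x) * f x\<bar> \<le> C"
proof -
  have "\<bar>\<Sum>x\<in>UNIV. pmf p (fst x) * pmf q (snd x) * f x\<bar>
      \<le> (\<Sum>x\<in>UNIV. pmf p (fst x) * pmf q (snd x) * C)"
    using assms by (intro order_trans[OF sum_abs] sum_mono) (simp add: abs_mult mult_left_mono)
  also have "\<dots> = C"
    by (simp add: sum_distrib_right[symmetric] sum_pmf_product)
  finally show ?thesis .
qed

lemma Bseq_add_seq:
  fixes f g :: "nat \<Rightarrow> 'a::real_normed_vector"
  assumes "Bseq f" and "Bseq g"
  shows "Bseq (\<lambda>n. f n + g n)"
proof -
  obtain K1 K2 where "\<And>n. norm (f n) \<le> K1" and "\<And>n. norm (g n) \<le> K2"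
    using assms unfolding Bseq_def by blast
  then show ?thesis
    by (intro BseqI'[where K = "K1 + K2"]) (meson add_mono norm_triangle_le)
qed

lemma Bseq_sum:
  fixes f :: "'i \<Rightarrow> nat \<Rightarrow> 'a::real_normed_vector"
  assumes "finite I" and "\<And>i. i \<in> I \<Longrightarrow> Bseq (f i)"
  shows "Bseq (\<lambda>n. \<Sum>i\<in>I. f i n)"
  using assms by (induction I rule: finite_induct) (auto intro: Bseq_add_seq)

lemma Bseq_scale: "Bseq f \<Longrightarrow> Bseq (\<lambda>n. c * f n)"
  for f :: "nat \<Rightarrow> real"
  by (rule Bseq_mult[OF Bfun_const])

definition continuation :: "'x \<Rightarrow> ('x list \<Rightarrow> 'e) \<Rightarrow> 'x list \<Rightarrow> 'e" where
  "continuation x s = (\<lambda>h. s (x # h))"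

definition extend_strategy :: "'e \<Rightarrow> ('x \<Rightarrow> 'x list \<Rightarrow> 'e) \<Rightarrow> 'x list \<Rightarrow> 'e" where
  "extend_strategy e0 S h = (case h of [] \<Rightarrow> e0 | x # h' \<Rightarrow> S x h')"

lemma extend_strategy_Nil [simp]: "extend_strategy e0 S [] = e0"
  by (simp add: extend_strategy_def)

lemma continuation_extend_strategy [simp]: "continuation x (extend_strategy e0 S) = S x"
  by (auto simp: continuation_def extend_strategy_def)

lemma hist_prob_Cons:
  "hist_prob s t (x # h) =
     pmf (s []) (fst x) * pmf (t []) (snd x) * hist_prob (continuation x s) (continuation x t) h"
  unfolding hist_prob_def continuation_def
  by (subst length_Cons, subst prod.lessThan_Suc_shift) (simp add: mult.assoc)

lemma stage_payoff_0:
  "stage_payoff g s t 0 = (\<Sum>x\<in>UNIV. pmf (s []) (fst x) * pmf (t []) (snd x) * g (fst x) (snd x))"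
  by (simp add: stage_payoff_def hist_prob_def sum_UNIV_prod)

lemma stage_payoff_Suc:
  fixes g :: "'a::finite \<Rightarrow> 'b::finite \<Rightarrow> real"
  shows "stage_payoff g s t (Suc n) = (\<Sum>x\<in>UNIV. pmf (s []) (fst x) * pmf (t []) (snd x) *
           stage_payoff g (continuation x s) (continuation x t) n)"
proof -
  let ?X = "UNIV \<times> {h::('a \<times> 'b) list. length h = n}"
  let ?stage = "\<lambda>h. \<Sum>a\<in>UNIV. \<Sum>b\<in>UNIV. pmf (s h) a * pmf (t h) b * g a b"
  have histories: "{h. length h = Suc n} = (\<lambda>(x, h). x # h) ` ?X"
    by (auto simp: length_Suc_conv image_def)
  have "inj_on (\<lambda>(x, h). x # h) ?X"
    by (auto simp: inj_on_def)
  then have "stage_payoff g s t (Suc n) = (\<Sum>(x, h)\<in>?X. hist_prob s t (x # h) * ?stage (x # h))"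
    unfolding stage_payoff_def histories by (subst sum.reindex) (simp_all add: case_prod_beta)
  also have "\<dots> = (\<Sum>x\<in>UNIV. \<Sum>h | length h = n. hist_prob s t (x # h) * ?stage (x # h))"
    by (subst sum.cartesian_product) simp
  finally show ?thesis
    unfolding stage_payoff_def hist_prob_Cons
    by (simp add: sum_distrib_left mult.assoc continuation_def)
qed

lemma abs_stage_payoff_le:
  fixes g :: "'a::finite \<Rightarrow> 'b::finite \<Rightarrow> real"
  assumes "\<And>a b. \<bar>g a b\<bar> \<le> C"
  shows "\<bar>stage_payoff g s t n\<bar> \<le> C"
proof (induction n arbitrary: s t)
  case 0
  show ?case
    unfolding stage_payoff_0 by (rule abs_expectation_product_le) (use assms in auto)
next
  case (Suc n)
  show ?case
    unfolding stage_payoff_Suc by (rule abs_expectation_product_le) (rule Suc.IH)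
qed

lemma Bseq_stage_payoff: "Bseq (stage_payoff g s t)"
proof (rule BseqI')
  fix n
  have "\<bar>g a b\<bar> \<le> (\<Sum>a\<in>UNIV. \<Sum>b\<in>UNIV. \<bar>g a b\<bar>)" for a b
    by (intro member_le_sum[of a, THEN order_trans[rotated]] member_le_sum sum_nonneg) auto
  then show "norm (stage_payoff g s t n) \<le> (\<Sum>a\<in>UNIV. \<Sum>b\<in>UNIV. \<bar>g a b\<bar>)"
    unfolding real_norm_def by (rule abs_stage_payoff_le)
qed

section \<open>Evaluations of payoff streams\<close>

definition evaluation :: "((nat \<Rightarrow> real) \<Rightarrow> real) \<Rightarrow> bool" where
  "evaluation W \<longleftrightarrow>
     (\<forall>f g. Bseq f \<longrightarrow> Bseq g \<longrightarrow> W (\<lambda>n. f n + g n) = W f + W g)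
   \<and> (\<forall>f c. Bseq f \<longrightarrow> W (\<lambda>n. c * f n) = c * W f)
   \<and> (\<forall>f C. (\<forall>n. \<bar>f n\<bar> \<le> C) \<longrightarrow> \<bar>W f\<bar> \<le> C)"

definition evaluation_recursion ::
  "real \<Rightarrow> ((nat \<Rightarrow> real) \<Rightarrow> real) \<Rightarrow> ((nat \<Rightarrow> real) \<Rightarrow> real) \<Rightarrow> bool" where
  "evaluation_recursion lam W U \<longleftrightarrow>
     (\<forall>f. Bseq f \<longrightarrow> W f = lam * f 0 + (1 - lam) * U (\<lambda>n. f (Suc n)))"

lemma evaluation_add: "evaluation W \<Longrightarrow> Bseq f \<Longrightarrow> Bseq g \<Longrightarrow> W (\<lambda>n. f n + g n) = W f + W g"
  unfolding evaluation_def by blast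

lemma evaluation_scale: "evaluation W \<Longrightarrow> Bseq f \<Longrightarrow> W (\<lambda>n. c * f n) = c * W f"
  unfolding evaluation_def by blast

lemma evaluation_abs_le: "evaluation W \<Longrightarrow> (\<And>n. \<bar>f n\<bar> \<le> C) \<Longrightarrow> \<bar>W f\<bar> \<le> C"
  unfolding evaluation_def by blast

lemma evaluation_sum:
  assumes W: "evaluation W" and "finite I" and "\<And>i. i \<in> I \<Longrightarrow> Bseq (f i)"
  shows "W (\<lambda>n. \<Sum>i\<in>I. c i * f i n) = (\<Sum>i\<in>I. c i * W (f i))"
  using assms(2,3)
proof (induction I rule: finite_induct)
  case empty
  show ?case
    using evaluation_abs_le[OF W, of "\<lambda>n. 0" 0] by simp
next
  case (insert i I)
  then have "W (\<lambda>n. c i * f i n + (\<Sum>j\<in>I. c j * f j n)) = c i * W (f i) + W (\<lambda>n. \<Sum>j\<in>I. c j * f j n)"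
    by (simp add: evaluation_add[OF W] evaluation_scale[OF W] Bseq_scale Bseq_sum)
  with insert show ?case
    by simp
qed

lemma summable_discounted:
  fixes lam :: real
  assumes "0 < lam" and "lam < 1" and "Bseq f"
  shows "summable (\<lambda>n. lam * (1 - lam) ^ n * f n)"
proof -
  obtain K where K: "\<And>n. norm (f n) \<le> K"
    using assms(3) unfolding Bseq_def by blast
  show ?thesis
  proof (rule summable_comparison_test')
    show "summable (\<lambda>n. K * (lam * (1 - lam) ^ n))"
      using assms by (intro summable_mult summable_geometric) auto
    show "norm (lam * (1 - lam) ^ n * f n) \<le> K * (lam * (1 - lam) ^ n)" for n
      using assms K[of n] by (simp add: abs_mult mult_right_mono mult.commute)
  qed
qed

lemma suminf_discount_weights:
  fixes lam :: real
  assumes "0 < lam" and "lam < 1"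
  shows "(\<Sum>n. lam * (1 - lam) ^ n) = 1"
  using assms suminf_mult[OF summable_geometric[of "1 - lam"], of lam] suminf_geometric[of "1 - lam"]
  by simp

lemma evaluation_disc_total:
  assumes "0 < lam" and "lam < 1"
  shows "evaluation (disc_total lam)"
  unfolding evaluation_def
proof (intro conjI allI impI)
  fix f g :: "nat \<Rightarrow> real"
  assume "Bseq f" and "Bseq g"
  then show "disc_total lam (\<lambda>n. f n + g n) = disc_total lam f + disc_total lam g"
    unfolding disc_total_def using summable_discounted[OF assms]
    by (simp add: distrib_left suminf_add)
next
  fix f :: "nat \<Rightarrow> real" and c
  assume "Bseq f"
  then show "disc_total lam (\<lambda>n. c * f n) = c * disc_total lam f"
    unfolding disc_total_def using summable_discounted[OF assms]
    by (subst suminf_mult[symmetric]) (auto simp: algebra_simps)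
next
  fix f :: "nat \<Rightarrow> real" and C
  assume C: "\<forall>n. \<bar>f n\<bar> \<le> C"
  have "norm (disc_total lam f) \<le> (\<Sum>n. C * (lam * (1 - lam) ^ n))"
    unfolding disc_total_def
  proof (rule norm_suminf_le)
    show "norm (lam * (1 - lam) ^ n * f n) \<le> C * (lam * (1 - lam) ^ n)" for n
      using assms C by (simp add: abs_mult mult_right_mono mult.commute)
    show "summable (\<lambda>n. C * (lam * (1 - lam) ^ n))"
      using assms by (intro summable_mult summable_geometric) auto
  qed
  also have "\<dots> = C * (\<Sum>n. lam * (1 - lam) ^ n)"
    using assms by (intro suminf_mult summable_mult summable_geometric) auto
  also have "\<dots> = C"
    using suminf_discount_weights[OF assms] by simp
  finally show "\<bar>disc_total lam f\<bar> \<le> C"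
    by simp
qed

lemma sum_discount_weights: "(\<Sum>n<T. lam * (1 - lam) ^ n) = 1 - (1 - lam) ^ T"
  for lam :: real
  by (induction T) (auto simp: algebra_simps)

lemma evaluation_trunc_total:
  assumes "0 < lam" and "lam < 1"
  shows "evaluation (trunc_total lam T)"
  unfolding evaluation_def
proof (intro conjI allI impI)
  fix f :: "nat \<Rightarrow> real" and C
  assume C: "\<forall>n. \<bar>f n\<bar> \<le> C"
  then have "0 \<le> C"
    by (meson abs_ge_zero order_trans)
  have "\<bar>trunc_total lam T f\<bar> \<le> (\<Sum>n<T. C * (lam * (1 - lam) ^ n))"
    unfolding trunc_total_def using assms C
    by (intro order_trans[OF sum_abs] sum_mono) (simp add: abs_mult mult_right_mono mult.commute)
  also have "\<dots> = C * (\<Sum>n<T. lam * (1 - lam) ^ n)"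
    by (simp add: sum_distrib_left)
  also have "\<dots> = C * (1 - (1 - lam) ^ T)"
    by (simp only: sum_discount_weights)
  also have "\<dots> \<le> C"
    using assms \<open>0 \<le> C\<close> by (simp add: mult_left_le)
  finally show "\<bar>trunc_total lam T f\<bar> \<le> C" .
qed (simp_all add: trunc_total_def distrib_left sum.distrib sum_distrib_left algebra_simps)

lemma evaluation_recursion_disc_total:
  assumes "0 < lam" and "lam < 1"
  shows "evaluation_recursion lam (disc_total lam) (disc_total lam)"
  unfolding evaluation_recursion_def
proof (intro allI impI)
  fix f :: "nat \<Rightarrow> real"
  assume f: "Bseq f"
  then have "Bseq (\<lambda>n. f (Suc n))"
    by (rule Bseq_subseq)
  then have "(\<Sum>n. lam * (1 - lam) ^ Suc n * f (Suc n)) = (1 - lam) * (\<Sum>n. lam * (1 - lam) ^ n * f (Suc n))"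
    using suminf_mult[OF summable_discounted[OF assms], of _ "1 - lam"] by (simp add: algebra_simps)
  moreover have "(\<Sum>n. lam * (1 - lam) ^ Suc n * f (Suc n)) = (\<Sum>n. lam * (1 - lam) ^ n * f n) - lam * f 0"
    using suminf_split_head[OF summable_discounted[OF assms f]] by simp
  ultimately show "disc_total lam f = lam * f 0 + (1 - lam) * disc_total lam (\<lambda>n. f (Suc n))"
    unfolding disc_total_def by simp
qed

lemma evaluation_recursion_trunc_total:
  "evaluation_recursion lam (trunc_total lam (Suc T)) (trunc_total lam T)"
  unfolding evaluation_recursion_def trunc_total_def
  by (simp only: sum.lessThan_Suc_shift) (simp add: sum_distrib_left ac_simps)

section \<open>Guaranteed payoffs\<close>

definition payoff_bound :: "('k::finite \<Rightarrow> 'l::finite \<Rightarrow> 'a::finite \<Rightarrow> 'b::finite \<Rightarrow> real) \<Rightarrow> real" where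
  "payoff_bound M = Max (range (\<lambda>(k, l, a, b). \<bar>M k l a b\<bar>))"

lemma abs_le_payoff_bound: "\<bar>M k l a b\<bar> \<le> payoff_bound M"
proof -
  have "\<bar>M k l a b\<bar> \<in> range (\<lambda>(k, l, a, b). \<bar>M k l a b\<bar>)"
    by (rule range_eqI[where x = "(k, l, a, b)"]) simp
  then show ?thesis
    unfolding payoff_bound_def by (intro Max_ge finite_imageI) simp_all
qed

lemma payoff_bound_nonneg: "0 \<le> payoff_bound M"
  by (rule order_trans[OF abs_ge_zero abs_le_payoff_bound])

lemma abs_evaluation_stage_payoff_le:
  "evaluation W \<Longrightarrow> \<bar>W (stage_payoff (M k l) s t)\<bar> \<le> payoff_bound M"
  by (rule evaluation_abs_le, assumption, rule abs_stage_payoff_le, rule abs_le_payoff_bound)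

definition weighted_payoff ::
  "((nat \<Rightarrow> real) \<Rightarrow> real) \<Rightarrow> ('k::finite \<Rightarrow> 'l::finite \<Rightarrow> 'a::finite \<Rightarrow> 'b::finite \<Rightarrow> real)
   \<Rightarrow> ('k \<Rightarrow> real) \<Rightarrow> ('k \<Rightarrow> ('a \<times> 'b) list \<Rightarrow> 'a pmf) \<Rightarrow> 'l \<Rightarrow> (('a \<times> 'b) list \<Rightarrow> 'b pmf) \<Rightarrow> real" where
  "weighted_payoff W M w \<sigma> l t = (\<Sum>k\<in>UNIV. w k * W (stage_payoff (M k l) (\<sigma> k) t))"

definition guarantee ::
  "((nat \<Rightarrow> real) \<Rightarrow> real) \<Rightarrow> ('k::finite \<Rightarrow> 'l::finite \<Rightarrow> 'a::finite \<Rightarrow> 'b::finite \<Rightarrow> real)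
   \<Rightarrow> ('k \<Rightarrow> real) \<Rightarrow> ('k \<Rightarrow> ('a \<times> 'b) list \<Rightarrow> 'a pmf) \<Rightarrow> 'l \<Rightarrow> real" where
  "guarantee W M w \<sigma> l = (INF t. weighted_payoff W M w \<sigma> l t)"

lemma abs_weighted_payoff_le:
  assumes "evaluation W"
  shows "\<bar>weighted_payoff W M w \<sigma> l t\<bar> \<le> (\<Sum>k\<in>UNIV. \<bar>w k\<bar>) * payoff_bound M"
  unfolding weighted_payoff_def sum_distrib_right
  by (intro order_trans[OF sum_abs] sum_mono)
     (simp add: abs_mult mult_left_mono abs_evaluation_stage_payoff_le[OF assms])

lemma weighted_payoff_lower:
  "evaluation W \<Longrightarrow> - ((\<Sum>k\<in>UNIV. \<bar>w k\<bar>) * payoff_bound M) \<le> weighted_payoff W M w \<sigma> l t"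
  using abs_weighted_payoff_le[of W M w \<sigma> l t] by (simp add: abs_le_iff)

lemma bdd_below_weighted_payoff: "evaluation W \<Longrightarrow> bdd_below (range (weighted_payoff W M w \<sigma> l))"
  by (rule bdd_belowI2) (rule weighted_payoff_lower)

lemma guarantee_le_weighted_payoff: "evaluation W \<Longrightarrow> guarantee W M w \<sigma> l \<le> weighted_payoff W M w \<sigma> l t"
  unfolding guarantee_def by (rule cINF_lower[OF bdd_below_weighted_payoff]) auto

lemma le_guarantee: "(\<And>t. c \<le> weighted_payoff W M w \<sigma> l t) \<Longrightarrow> c \<le> guarantee W M w \<sigma> l"
  unfolding guarantee_def by (rule cINF_greatest) auto

lemma guarantee_approx:
  assumes "evaluation W" and "0 < \<epsilon>"
  obtains t where "weighted_payoff W M w \<sigma> l t < guarantee W M w \<sigma> l + \<epsilon>"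
proof -
  have "(INF t. weighted_payoff W M w \<sigma> l t) < guarantee W M w \<sigma> l + \<epsilon>"
    using assms(2) by (simp add: guarantee_def)
  then show ?thesis
    using that cINF_less_iff[OF UNIV_not_empty bdd_below_weighted_payoff[OF assms(1)]] by blast
qed

lemma abs_guarantee_le:
  assumes "evaluation W"
  shows "\<bar>guarantee W M w \<sigma> l\<bar> \<le> (\<Sum>k\<in>UNIV. \<bar>w k\<bar>) * payoff_bound M"
proof -
  have "guarantee W M w \<sigma> l \<le> (\<Sum>k\<in>UNIV. \<bar>w k\<bar>) * payoff_bound M"
    using guarantee_le_weighted_payoff[OF assms, of M w \<sigma> l undefined] abs_weighted_payoff_le[OF assms, of M w \<sigma> l undefined]
    by linarith
  moreover have "- ((\<Sum>k\<in>UNIV. \<bar>w k\<bar>) * payoff_bound M) \<le> guarantee W M w \<sigma> l"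
    by (rule le_guarantee) (rule weighted_payoff_lower[OF assms])
  ultimately show ?thesis
    by linarith
qed

lemma abs_guarantee_pmf_le: "evaluation W \<Longrightarrow> \<bar>guarantee W M (pmf \<pi>) \<sigma> l\<bar> \<le> payoff_bound M"
  using abs_guarantee_le[of W M "pmf \<pi>" \<sigma> l] by simp

lemma guarantee_zero [simp]: "guarantee W M (\<lambda>k. 0) \<sigma> l = 0"
  by (simp add: guarantee_def weighted_payoff_def)

lemma guarantee_scale:
  assumes W: "evaluation W" and "0 < c"
  shows "guarantee W M (\<lambda>k. c * w k) \<sigma> l = c * guarantee W M w \<sigma> l"
proof -
  have scale: "weighted_payoff W M (\<lambda>k. c * w k) \<sigma> l t = c * weighted_payoff W M w \<sigma> l t" for t
    by (simp add: weighted_payoff_def sum_distrib_left mult.assoc)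
  have "c * guarantee W M w \<sigma> l \<le> guarantee W M (\<lambda>k. c * w k) \<sigma> l"
    using \<open>0 < c\<close> by (intro le_guarantee) (simp add: scale guarantee_le_weighted_payoff[OF W])
  moreover have "guarantee W M (\<lambda>k. c * w k) \<sigma> l / c \<le> guarantee W M w \<sigma> l"
    using \<open>0 < c\<close> guarantee_le_weighted_payoff[OF W, of M "\<lambda>k. c * w k" \<sigma> l]
    by (intro le_guarantee) (simp add: scale divide_le_eq mult.commute)
  then have "guarantee W M (\<lambda>k. c * w k) \<sigma> l \<le> c * guarantee W M w \<sigma> l"
    using \<open>0 < c\<close> by (simp add: divide_le_eq mult.commute)
  ultimately show ?thesis
    by (rule antisym[rotated])
qed

lemma guarantee_lipschitz:
  assumes "evaluation W"
  shows "guarantee W M w' \<sigma> l - (\<Sum>k\<in>UNIV. \<bar>w k - w' k\<bar>) * payoff_bound M \<le> guarantee W M w \<sigma> l"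
proof (rule le_guarantee)
  fix t
  have "weighted_payoff W M w \<sigma> l t = weighted_payoff W M w' \<sigma> l t + weighted_payoff W M (\<lambda>k. w k - w' k) \<sigma> l t"
    unfolding weighted_payoff_def sum.distrib[symmetric] by (rule sum.cong) (auto simp: algebra_simps)
  then show "guarantee W M w' \<sigma> l - (\<Sum>k\<in>UNIV. \<bar>w k - w' k\<bar>) * payoff_bound M \<le> weighted_payoff W M w \<sigma> l t"
    using weighted_payoff_lower[OF assms, of "\<lambda>k. w k - w' k" M \<sigma> l t] guarantee_le_weighted_payoff[OF assms, of M w' \<sigma> l t]
    by linarith
qed

definition next_weights ::
  "('k \<Rightarrow> real) \<Rightarrow> ('k \<Rightarrow> ('a \<times> 'b) list \<Rightarrow> 'a pmf) \<Rightarrow> 'a \<times> 'b \<Rightarrow> 'k \<Rightarrow> real" where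
  "next_weights w \<sigma> x k = w k * pmf (\<sigma> k []) (fst x)"

definition next_strategies :: "('k \<Rightarrow> 'x list \<Rightarrow> 'e) \<Rightarrow> 'x \<Rightarrow> 'k \<Rightarrow> 'x list \<Rightarrow> 'e" where
  "next_strategies \<sigma> x k = continuation x (\<sigma> k)"

lemma sum_next_weights:
  fixes w :: "'k::finite \<Rightarrow> real" and \<sigma> :: "'k \<Rightarrow> ('a::finite \<times> 'b::finite) list \<Rightarrow> 'a pmf"
  shows "(\<Sum>x\<in>UNIV. pmf q (snd x) * sum (next_weights w \<sigma> x) UNIV) = sum w UNIV"
proof -
  have "(\<Sum>x\<in>UNIV. pmf q (snd x) * sum (next_weights w \<sigma> x) UNIV)
      = (\<Sum>k\<in>UNIV. w k * (\<Sum>x\<in>UNIV. pmf (\<sigma> k []) (fst x) * pmf q (snd x)))"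
    unfolding next_weights_def sum_distrib_left by (subst sum.swap) (simp add: mult_ac)
  then show ?thesis
    by (simp add: sum_pmf_product)
qed

lemma evaluation_stage_payoff_recursion:
  assumes U: "evaluation U" and rec: "evaluation_recursion lam W U"
  shows "W (stage_payoff g s t) = lam * stage_payoff g s t 0 + (1 - lam) *
           (\<Sum>x\<in>UNIV. pmf (s []) (fst x) * pmf (t []) (snd x) *
              U (stage_payoff g (continuation x s) (continuation x t)))"
proof -
  have "W (stage_payoff g s t) = lam * stage_payoff g s t 0 + (1 - lam) * U (\<lambda>n. stage_payoff g s t (Suc n))"
    using rec Bseq_stage_payoff unfolding evaluation_recursion_def by blast
  also have "U (\<lambda>n. stage_payoff g s t (Suc n)) = (\<Sum>x\<in>UNIV. pmf (s []) (fst x) * pmf (t []) (snd x) *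
              U (stage_payoff g (continuation x s) (continuation x t)))"
    unfolding stage_payoff_Suc by (rule evaluation_sum[OF U]) (auto simp: Bseq_stage_payoff)
  finally show ?thesis .
qed

lemma weighted_payoff_recursion:
  assumes "evaluation U" and "evaluation_recursion lam W U"
  shows "weighted_payoff W M w \<sigma> l t = lam * (\<Sum>k\<in>UNIV. w k * stage_payoff (M k l) (\<sigma> k) t 0) + (1 - lam) *
           (\<Sum>x\<in>UNIV. pmf (t []) (snd x) *
              weighted_payoff U M (next_weights w \<sigma> x) (next_strategies \<sigma> x) l (continuation x t))"
proof -
  let ?next = "\<lambda>k. \<Sum>x\<in>UNIV. pmf (\<sigma> k []) (fst x) * pmf (t []) (snd x) *
                 U (stage_payoff (M k l) (continuation x (\<sigma> k)) (continuation x t))"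
  have "weighted_payoff W M w \<sigma> l t
      = (\<Sum>k\<in>UNIV. w k * (lam * stage_payoff (M k l) (\<sigma> k) t 0 + (1 - lam) * ?next k))"
    unfolding weighted_payoff_def evaluation_stage_payoff_recursion[OF assms] ..
  also have "\<dots> = lam * (\<Sum>k\<in>UNIV. w k * stage_payoff (M k l) (\<sigma> k) t 0) + (1 - lam) * (\<Sum>k\<in>UNIV. w k * ?next k)"
    by (simp add: distrib_left sum.distrib sum_distrib_left mult_ac)
  also have "(\<Sum>k\<in>UNIV. w k * ?next k) = (\<Sum>x\<in>UNIV. pmf (t []) (snd x) *
              weighted_payoff U M (next_weights w \<sigma> x) (next_strategies \<sigma> x) l (continuation x t))"
    unfolding weighted_payoff_def next_weights_def next_strategies_def sum_distrib_left
    by (subst sum.swap) (simp add: mult_ac)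
  finally show ?thesis .
qed

lemma guarantee_le_one_step:
  fixes M :: "'k::finite \<Rightarrow> 'l::finite \<Rightarrow> 'a::finite \<Rightarrow> 'b::finite \<Rightarrow> real"
  assumes U: "evaluation U" and W: "evaluation W" and rec: "evaluation_recursion lam W U"
    and "0 \<le> lam" and "lam \<le> 1"
  shows "guarantee W M w \<sigma> l \<le> lam * (\<Sum>k\<in>UNIV. w k * stage_payoff (M k l) (\<sigma> k) t 0) + (1 - lam) *
           (\<Sum>x\<in>UNIV. pmf (t []) (snd x) * guarantee U M (next_weights w \<sigma> x) (next_strategies \<sigma> x) l)"
    (is "_ \<le> ?first + (1 - lam) * ?next")
proof (rule field_le_epsilon)
  fix \<epsilon> :: real
  assume "0 < \<epsilon>"
  then have "\<forall>x. \<exists>r. weighted_payoff U M (next_weights w \<sigma> x) (next_strategies \<sigma> x) l r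
                   < guarantee U M (next_weights w \<sigma> x) (next_strategies \<sigma> x) l + \<epsilon> / CARD('a)"
    by (metis guarantee_approx[OF U] divide_pos_pos of_nat_0_less_iff zero_less_card_finite)
  then obtain R where R: "\<And>x. weighted_payoff U M (next_weights w \<sigma> x) (next_strategies \<sigma> x) l (R x)
                   < guarantee U M (next_weights w \<sigma> x) (next_strategies \<sigma> x) l + \<epsilon> / CARD('a)"
    by metis
  have eps: "(\<Sum>x\<in>(UNIV::('a \<times> 'b) set). pmf (t []) (snd x) * (\<epsilon> / CARD('a))) = \<epsilon>"
    by (simp only: sum_distrib_right[symmetric] sum_pmf_snd) simp
  let ?t = "extend_strategy (t []) R"
  have "guarantee W M w \<sigma> l \<le> weighted_payoff W M w \<sigma> l ?t"
    by (rule guarantee_le_weighted_payoff[OF W])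
  also have "\<dots> = ?first + (1 - lam) * (\<Sum>x\<in>UNIV. pmf (t []) (snd x) *
              weighted_payoff U M (next_weights w \<sigma> x) (next_strategies \<sigma> x) l (R x))"
    unfolding weighted_payoff_recursion[OF U rec] by (simp add: stage_payoff_0)
  also have "\<dots> \<le> ?first + (1 - lam) * (\<Sum>x\<in>UNIV. pmf (t []) (snd x) *
              (guarantee U M (next_weights w \<sigma> x) (next_strategies \<sigma> x) l + \<epsilon> / CARD('a)))"
    using R \<open>lam \<le> 1\<close> by (intro add_left_mono mult_left_mono sum_mono) (auto intro: less_imp_le)
  also have "\<dots> = ?first + (1 - lam) * ?next + (1 - lam) * \<epsilon>"
    using eps by (simp only: distrib_left sum.distrib add.assoc)
  also have "\<dots> \<le> ?first + (1 - lam) * ?next + \<epsilon>"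
    using \<open>0 < \<epsilon>\<close> \<open>0 \<le> lam\<close> \<open>lam \<le> 1\<close> by (intro add_left_mono mult_left_le_one_le) auto
  finally show "guarantee W M w \<sigma> l \<le> ?first + (1 - lam) * ?next + \<epsilon>" .
qed

definition guarantees_within ::
  "((nat \<Rightarrow> real) \<Rightarrow> real) \<Rightarrow> ((nat \<Rightarrow> real) \<Rightarrow> real)
   \<Rightarrow> ('k::finite \<Rightarrow> 'l::finite \<Rightarrow> 'a::finite \<Rightarrow> 'b::finite \<Rightarrow> real) \<Rightarrow> real \<Rightarrow> bool" where
  "guarantees_within W W' M e \<longleftrightarrow>
     (\<forall>w \<sigma> \<delta>. (\<forall>k. 0 \<le> w k) \<longrightarrow> 0 < \<delta> \<longrightarrow>
        (\<exists>\<sigma>'. \<forall>l. guarantee W M w \<sigma> l - (e + \<delta>) * sum w UNIV \<le> guarantee W' M w \<sigma>' l))"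

lemma guarantees_withinD:
  assumes "guarantees_within W W' M e" and "\<And>k. 0 \<le> w k" and "0 < \<delta>"
  shows "\<exists>\<sigma>'. \<forall>l. guarantee W M w \<sigma> l - (e + \<delta>) * sum w UNIV \<le> guarantee W' M w \<sigma>' l"
  using assms unfolding guarantees_within_def by blast

lemma guarantees_within_twice_payoff_bound:
  assumes "evaluation W" and "evaluation W'"
  shows "guarantees_within W W' M (2 * payoff_bound M)"
  unfolding guarantees_within_def
proof (intro allI impI exI)
  fix w :: "'a \<Rightarrow> real" and \<sigma> and \<delta> :: real and l
  assume w: "\<forall>k. 0 \<le> w k" and "0 < \<delta>"
  then have "(\<Sum>k\<in>UNIV. \<bar>w k\<bar>) = sum w UNIV" and "0 \<le> \<delta> * sum w UNIV"
    by (simp_all add: sum_nonneg)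
  then show "guarantee W M w \<sigma> l - (2 * payoff_bound M + \<delta>) * sum w UNIV \<le> guarantee W' M w \<sigma> l"
    using abs_guarantee_le[OF assms(1), of M w \<sigma> l] abs_guarantee_le[OF assms(2), of M w \<sigma> l]
    by (simp add: abs_le_iff algebra_simps)
qed

lemma guarantees_within_contraction:
  fixes M :: "'k::finite \<Rightarrow> 'l::finite \<Rightarrow> 'a::finite \<Rightarrow> 'b::finite \<Rightarrow> real"
  assumes U: "evaluation U" and U': "evaluation U'" and W: "evaluation W"
    and rec: "evaluation_recursion lam W U" and rec': "evaluation_recursion lam W' U'"
    and lam: "0 \<le> lam" "lam \<le> 1" and within: "guarantees_within U U' M e"
  shows "guarantees_within W W' M ((1 - lam) * e)"
  unfolding guarantees_within_def
proof (intro allI impI)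
  fix w :: "'k \<Rightarrow> real" and \<sigma> :: "'k \<Rightarrow> ('a \<times> 'b) list \<Rightarrow> 'a pmf" and \<delta> :: real
  assume w: "\<forall>k. 0 \<le> w k" and "0 < \<delta>"
  have "\<forall>x. \<exists>s. \<forall>l. guarantee U M (next_weights w \<sigma> x) (next_strategies \<sigma> x) l
                      - (e + \<delta>) * sum (next_weights w \<sigma> x) UNIV \<le> guarantee U' M (next_weights w \<sigma> x) s l"
    using w \<open>0 < \<delta>\<close> by (intro allI guarantees_withinD[OF within]) (simp_all add: next_weights_def)
  then obtain S where S: "\<And>x l. guarantee U M (next_weights w \<sigma> x) (next_strategies \<sigma> x) l
                      - (e + \<delta>) * sum (next_weights w \<sigma> x) UNIV \<le> guarantee U' M (next_weights w \<sigma> x) (S x) l"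
    by metis
  define \<sigma>' where "\<sigma>' k = extend_strategy (\<sigma> k []) (\<lambda>x. S x k)" for k
  have \<sigma>'_Nil: "\<sigma>' k [] = \<sigma> k []" for k
    by (simp add: \<sigma>'_def)
  have next_\<sigma>': "next_weights w \<sigma>' = next_weights w \<sigma>" "next_strategies \<sigma>' = S"
    by (simp_all add: fun_eq_iff \<sigma>'_Nil next_weights_def next_strategies_def \<sigma>'_def)
  have shrink: "(1 - lam) * (e + \<delta>) * sum w UNIV \<le> ((1 - lam) * e + \<delta>) * sum w UNIV"
    using lam \<open>0 < \<delta>\<close> w by (intro mult_right_mono sum_nonneg) (auto simp: algebra_simps)
  show "\<exists>\<sigma>'. \<forall>l. guarantee W M w \<sigma> l - ((1 - lam) * e + \<delta>) * sum w UNIV \<le> guarantee W' M w \<sigma>' l"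
  proof (intro exI allI le_guarantee)
    fix l t
    let ?first = "lam * (\<Sum>k\<in>UNIV. w k * stage_payoff (M k l) (\<sigma> k) t 0)"
    have "guarantee W M w \<sigma> l - ((1 - lam) * e + \<delta>) * sum w UNIV
        \<le> ?first + (1 - lam) * (\<Sum>x\<in>UNIV. pmf (t []) (snd x) *
             guarantee U M (next_weights w \<sigma> x) (next_strategies \<sigma> x) l) - (1 - lam) * (e + \<delta>) * sum w UNIV"
      using guarantee_le_one_step[OF U W rec lam, of M w \<sigma> l t] shrink by linarith
    also have "\<dots> = ?first + (1 - lam) * (\<Sum>x\<in>UNIV. pmf (t []) (snd x) *
             (guarantee U M (next_weights w \<sigma> x) (next_strategies \<sigma> x) l
              - (e + \<delta>) * sum (next_weights w \<sigma> x) UNIV))"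
      by (simp add: right_diff_distrib sum_subtractf sum_distrib_left[symmetric] mult_ac
            sum_next_weights[of "t []" w \<sigma>, symmetric])
    also have "\<dots> \<le> ?first + (1 - lam) * (\<Sum>x\<in>UNIV. pmf (t []) (snd x) *
             weighted_payoff U' M (next_weights w \<sigma> x) (S x) l (continuation x t))"
      using lam order_trans[OF S guarantee_le_weighted_payoff[OF U']] by (intro add_left_mono mult_left_mono sum_mono) auto
    also have "\<dots> = weighted_payoff W' M w \<sigma>' l t"
      by (simp add: weighted_payoff_recursion[OF U' rec'] next_\<sigma>' stage_payoff_0 \<sigma>'_Nil)
    finally show "guarantee W M w \<sigma> l - ((1 - lam) * e + \<delta>) * sum w UNIV \<le> weighted_payoff W' M w \<sigma>' l t" .
  qed
qed

lemma guarantees_within_of_pmf_weights: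
  fixes M :: "'k::finite \<Rightarrow> 'l::finite \<Rightarrow> 'a::finite \<Rightarrow> 'b::finite \<Rightarrow> real"
  assumes W: "evaluation W" and W': "evaluation W'"
    and pmf_weights: "\<And>\<pi> \<sigma> \<delta>. 0 < \<delta> \<Longrightarrow>
           \<exists>\<sigma>'. \<forall>l. guarantee W M (pmf \<pi>) \<sigma> l - (e + \<delta>) \<le> guarantee W' M (pmf \<pi>) \<sigma>' l"
  shows "guarantees_within W W' M e"
  unfolding guarantees_within_def
proof (intro allI impI)
  fix w :: "'k \<Rightarrow> real" and \<sigma> and \<delta> :: real
  assume w: "\<forall>k. 0 \<le> w k" and "0 < \<delta>"
  show "\<exists>\<sigma>'. \<forall>l. guarantee W M w \<sigma> l - (e + \<delta>) * sum w UNIV \<le> guarantee W' M w \<sigma>' l"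
  proof (cases "sum w UNIV = 0")
    case True
    then have "w = (\<lambda>k. 0)"
      using w by (auto simp: sum_nonneg_eq_0_iff)
    then show ?thesis
      by simp
  next
    case False
    define s where "s = sum w UNIV"
    have "0 < s"
      using False w unfolding s_def by (metis order_le_less sum_nonneg)
    have "pmf (embed_pmf (\<lambda>k. w k / s)) = (\<lambda>k. w k / s)"
      using w \<open>0 < s\<close> by (intro pmf_embed_pmf_finite) (auto simp: s_def sum_divide_distrib[symmetric])
    then obtain \<pi> where "pmf \<pi> = (\<lambda>k. w k / s)"
      by blast
    then have w_eq: "w = (\<lambda>k. s * pmf \<pi> k)"
      using \<open>0 < s\<close> by (simp add: fun_eq_iff)
    obtain \<sigma>' where \<sigma>': "\<And>l. guarantee W M (pmf \<pi>) \<sigma> l - (e + \<delta>) \<le> guarantee W' M (pmf \<pi>) \<sigma>' l"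
      using pmf_weights[OF \<open>0 < \<delta>\<close>] by blast
    have "guarantee W M w \<sigma> l = s * guarantee W M (pmf \<pi>) \<sigma> l"
      and "guarantee W' M w \<sigma>' l = s * guarantee W' M (pmf \<pi>) \<sigma>' l" for l
      by (simp_all add: w_eq guarantee_scale[OF W \<open>0 < s\<close>] guarantee_scale[OF W' \<open>0 < s\<close>])
    then have "guarantee W M w \<sigma> l - (e + \<delta>) * sum w UNIV \<le> guarantee W' M w \<sigma>' l" for l
      using mult_left_mono[OF \<sigma>'[of l], of s] \<open>0 < s\<close> unfolding s_def[symmetric]
      by (simp add: algebra_simps)
    then show ?thesis
      by blast
  qed
qed

section \<open>Values of the dual games\<close>

lemma cINF_sum_pmf_choice:
  fixes F :: "'l::finite \<Rightarrow> 'x \<Rightarrow> real"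
  assumes bdd: "\<And>l. bdd_below (range (F l))"
  shows "(INF \<tau>. c + (\<Sum>l\<in>UNIV. pmf q l * F l (\<tau> l))) = c + (\<Sum>l\<in>UNIV. pmf q l * (INF x. F l x))"
proof (rule antisym)
  have lower: "c + (\<Sum>l\<in>UNIV. pmf q l * (INF x. F l x)) \<le> c + (\<Sum>l\<in>UNIV. pmf q l * F l (\<tau> l))" for \<tau>
    using cINF_lower[OF bdd] by (intro add_left_mono sum_mono mult_left_mono) auto
  then show "c + (\<Sum>l\<in>UNIV. pmf q l * (INF x. F l x)) \<le> (INF \<tau>. c + (\<Sum>l\<in>UNIV. pmf q l * F l (\<tau> l)))"
    by (intro cINF_greatest) auto
  show "(INF \<tau>. c + (\<Sum>l\<in>UNIV. pmf q l * F l (\<tau> l))) \<le> c + (\<Sum>l\<in>UNIV. pmf q l * (INF x. F l x))"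
  proof (rule field_le_epsilon)
    fix \<epsilon> :: real
    assume "0 < \<epsilon>"
    then have "(INF x. F l x) < (INF x. F l x) + \<epsilon>" for l
      by simp
    then have "\<forall>l. \<exists>x. F l x < (INF x. F l x) + \<epsilon>"
      using cINF_less_iff[OF UNIV_not_empty bdd] by blast
    then obtain \<tau> where \<tau>: "\<And>l. F l (\<tau> l) < (INF x. F l x) + \<epsilon>"
      by metis
    have "(INF \<tau>. c + (\<Sum>l\<in>UNIV. pmf q l * F l (\<tau> l))) \<le> c + (\<Sum>l\<in>UNIV. pmf q l * F l (\<tau> l))"
      by (rule cINF_lower, rule bdd_belowI2, rule lower) simp
    also have "\<dots> \<le> c + (\<Sum>l\<in>UNIV. pmf q l * ((INF x. F l x) + \<epsilon>))"
      using \<tau> by (intro add_left_mono sum_mono mult_left_mono) (auto intro: less_imp_le)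
    also have "\<dots> = c + (\<Sum>l\<in>UNIV. pmf q l * (INF x. F l x)) + \<epsilon>"
      by (simp add: distrib_left sum.distrib sum_distrib_right[symmetric])
    finally show "(INF \<tau>. c + (\<Sum>l\<in>UNIV. pmf q l * F l (\<tau> l))) \<le> c + (\<Sum>l\<in>UNIV. pmf q l * (INF x. F l x)) + \<epsilon>" .
  qed
qed

definition dual1_guarantee ::
  "((nat \<Rightarrow> real) \<Rightarrow> real) \<Rightarrow> ('k::finite \<Rightarrow> 'l::finite \<Rightarrow> 'a::finite \<Rightarrow> 'b::finite \<Rightarrow> real)
   \<Rightarrow> ('k \<Rightarrow> real) \<Rightarrow> 'l pmf \<Rightarrow> 'k pmf \<Rightarrow> ('k \<Rightarrow> ('a \<times> 'b) list \<Rightarrow> 'a pmf) \<Rightarrow> real" where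
  "dual1_guarantee W M \<mu> q \<pi> \<sigma> =
     (\<Sum>k\<in>UNIV. pmf \<pi> k * \<mu> k) + (\<Sum>l\<in>UNIV. pmf q l * guarantee W M (pmf \<pi>) \<sigma> l)"

definition dual2_guarantee ::
  "((nat \<Rightarrow> real) \<Rightarrow> real) \<Rightarrow> ('k::finite \<Rightarrow> 'l::finite \<Rightarrow> 'a::finite \<Rightarrow> 'b::finite \<Rightarrow> real)
   \<Rightarrow> 'k pmf \<Rightarrow> ('l \<Rightarrow> real) \<Rightarrow> ('k \<Rightarrow> ('a \<times> 'b) list \<Rightarrow> 'a pmf) \<Rightarrow> real" where
  "dual2_guarantee W M p \<nu> \<sigma> = (MIN l. \<nu> l + guarantee W M (pmf p) \<sigma> l)"

lemma dual2_guarantee_le: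
  "dual2_guarantee W M p \<nu> \<sigma> \<le> \<nu> l + guarantee W M (pmf p) \<sigma> l"
  unfolding dual2_guarantee_def by (rule Min_le) auto

lemma dual2_guarantee_le_expectation:
  "dual2_guarantee W M p \<nu> \<sigma> \<le> (\<Sum>l\<in>UNIV. pmf Q l * (\<nu> l + guarantee W M (pmf p) \<sigma> l))"
proof -
  have "dual2_guarantee W M p \<nu> \<sigma> = (\<Sum>l\<in>UNIV. pmf Q l * dual2_guarantee W M p \<nu> \<sigma>)"
    by (simp add: sum_distrib_right[symmetric])
  also have "\<dots> \<le> (\<Sum>l\<in>UNIV. pmf Q l * (\<nu> l + guarantee W M (pmf p) \<sigma> l))"
    by (intro sum_mono mult_left_mono dual2_guarantee_le) simp
  finally show ?thesis .
qed

lemma dual1_val_eq: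
  assumes "evaluation W"
  shows "dual1_val W M \<mu> q = (SUP (\<pi>, \<sigma>)\<in>UNIV. dual1_guarantee W M \<mu> q \<pi> \<sigma>)"
  unfolding dual1_val_def
proof (intro arg_cong[where f = Sup] image_cong refl, clarify)
  fix \<pi> \<sigma>
  have "dual1_payoff W M \<mu> q \<pi> \<sigma> \<tau> =
      (\<Sum>k\<in>UNIV. pmf \<pi> k * \<mu> k) + (\<Sum>l\<in>UNIV. pmf q l * weighted_payoff W M (pmf \<pi>) \<sigma> l (\<tau> l))" for \<tau>
  proof -
    have "(\<Sum>l\<in>UNIV. pmf q l * weighted_payoff W M (pmf \<pi>) \<sigma> l (\<tau> l))
        = (\<Sum>k\<in>UNIV. pmf \<pi> k * (\<Sum>l\<in>UNIV. pmf q l * W (stage_payoff (M k l) (\<sigma> k) (\<tau> l))))"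
      unfolding weighted_payoff_def sum_distrib_left by (subst sum.swap) (simp add: mult_ac)
    then show ?thesis
      by (simp add: dual1_payoff_def distrib_left sum.distrib)
  qed
  then show "(INF \<tau>. dual1_payoff W M \<mu> q \<pi> \<sigma> \<tau>) = dual1_guarantee W M \<mu> q \<pi> \<sigma>"
    unfolding dual1_guarantee_def guarantee_def
    by (simp add: cINF_sum_pmf_choice bdd_below_weighted_payoff[OF assms])
qed

lemma dual2_val_eq:
  assumes W: "evaluation W"
  shows "dual2_val W M p \<nu> = (SUP \<sigma>. dual2_guarantee W M p \<nu> \<sigma>)"
  unfolding dual2_val_def
proof (intro arg_cong[where f = Sup] image_cong refl antisym)
  fix \<sigma>
  let ?payoff = "\<lambda>(\<rho>, \<tau>). dual2_payoff W M p \<nu> \<sigma> \<rho> \<tau>"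
  have payoff: "dual2_payoff W M p \<nu> \<sigma> \<rho> \<tau> = (\<Sum>l\<in>UNIV. pmf \<rho> l * (\<nu> l + weighted_payoff W M (pmf p) \<sigma> l (\<tau> l)))"
    for \<rho> \<tau>
    by (simp add: dual2_payoff_def weighted_payoff_def)
  have lower: "dual2_guarantee W M p \<nu> \<sigma> \<le> ?payoff x" for x
  proof (cases x)
    case (Pair \<rho> \<tau>)
    have "dual2_guarantee W M p \<nu> \<sigma> \<le> (\<Sum>l\<in>UNIV. pmf \<rho> l * (\<nu> l + guarantee W M (pmf p) \<sigma> l))"
      by (rule dual2_guarantee_le_expectation)
    also have "\<dots> \<le> ?payoff x"
      using guarantee_le_weighted_payoff[OF W] by (auto simp: Pair payoff intro!: sum_mono mult_left_mono)
    finally show ?thesis .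
  qed
  then show "dual2_guarantee W M p \<nu> \<sigma> \<le> (INF x. ?payoff x)"
    by (intro cINF_greatest) auto
  have "dual2_guarantee W M p \<nu> \<sigma> \<in> range (\<lambda>l. \<nu> l + guarantee W M (pmf p) \<sigma> l)"
    unfolding dual2_guarantee_def by (rule Min_in) simp_all
  then obtain l where l: "dual2_guarantee W M p \<nu> \<sigma> = \<nu> l + guarantee W M (pmf p) \<sigma> l"
    by blast
  have "(INF x. ?payoff x) - \<nu> l \<le> guarantee W M (pmf p) \<sigma> l"
  proof (rule le_guarantee)
    fix t
    have "(INF x. ?payoff x) \<le> ?payoff (return_pmf l, \<lambda>_. t)"
      by (rule cINF_lower, rule bdd_belowI2, rule lower) simp
    then show "(INF x. ?payoff x) - \<nu> l \<le> weighted_payoff W M (pmf p) \<sigma> l t"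
      by (simp add: payoff pmf_return indicator_def)
  qed
  then show "(INF x. ?payoff x) \<le> dual2_guarantee W M p \<nu> \<sigma>"
    by (simp add: l)
qed

lemma bdd_above_dual1_guarantee:
  assumes "evaluation W"
  shows "bdd_above ((\<lambda>(\<pi>, \<sigma>). dual1_guarantee W M \<mu> q \<pi> \<sigma>) ` UNIV)"
proof (rule bdd_aboveI2, clarify)
  fix \<pi> \<sigma>
  have "pmf \<pi> k * \<mu> k \<le> \<bar>\<mu> k\<bar>" for k
  proof -
    have "pmf \<pi> k * \<mu> k \<le> pmf \<pi> k * \<bar>\<mu> k\<bar>"
      by (simp add: mult_left_mono)
    also have "\<dots> \<le> \<bar>\<mu> k\<bar>"
      by (simp add: mult_left_le_one_le pmf_le_1)
    finally show ?thesis .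
  qed
  then have "(\<Sum>k\<in>UNIV. pmf \<pi> k * \<mu> k) \<le> (\<Sum>k\<in>UNIV. \<bar>\<mu> k\<bar>)"
    by (rule sum_mono)
  moreover have "(\<Sum>l\<in>UNIV. pmf q l * guarantee W M (pmf \<pi>) \<sigma> l) \<le> (\<Sum>l\<in>UNIV. pmf q l * payoff_bound M)"
    using abs_guarantee_pmf_le[OF assms] by (intro sum_mono mult_left_mono) (auto simp: abs_le_iff)
  ultimately show "dual1_guarantee W M \<mu> q \<pi> \<sigma> \<le> (\<Sum>k\<in>UNIV. \<bar>\<mu> k\<bar>) + payoff_bound M"
    by (simp add: dual1_guarantee_def sum_distrib_right[symmetric])
qed

lemma bdd_above_dual2_guarantee:
  assumes "evaluation W"
  shows "bdd_above (range (dual2_guarantee W M p \<nu>))"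
proof (rule bdd_aboveI2)
  fix \<sigma>
  show "dual2_guarantee W M p \<nu> \<sigma> \<le> \<nu> undefined + payoff_bound M"
    using dual2_guarantee_le[of W M p \<nu> \<sigma> undefined] abs_guarantee_pmf_le[OF assms, of M p \<sigma> undefined]
    by linarith
qed

lemma dual1_val_le_of_guarantees_within:
  assumes W: "evaluation W" and W': "evaluation W'" and within: "guarantees_within W W' M d"
  shows "dual1_val W M \<mu> q \<le> dual1_val W' M \<mu> q + d"
  unfolding dual1_val_eq[OF W] dual1_val_eq[OF W']
proof (rule field_le_epsilon, rule cSUP_least, simp, clarify)
  fix \<delta> :: real and \<pi> \<sigma>
  assume "0 < \<delta>"
  then obtain \<sigma>' where \<sigma>': "\<And>l. guarantee W M (pmf \<pi>) \<sigma> l - (d + \<delta>) \<le> guarantee W' M (pmf \<pi>) \<sigma>' l"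
    using guarantees_withinD[of W W' M d "pmf \<pi>" \<delta> \<sigma>] within by auto
  have "dual1_guarantee W M \<mu> q \<pi> \<sigma> - (d + \<delta>) = (\<Sum>k\<in>UNIV. pmf \<pi> k * \<mu> k)
      + (\<Sum>l\<in>UNIV. pmf q l * (guarantee W M (pmf \<pi>) \<sigma> l - (d + \<delta>)))"
    by (simp add: dual1_guarantee_def right_diff_distrib sum_subtractf sum_distrib_right[symmetric])
  also have "\<dots> \<le> dual1_guarantee W' M \<mu> q \<pi> \<sigma>'"
    unfolding dual1_guarantee_def using \<sigma>' by (intro add_left_mono sum_mono mult_left_mono) auto
  also have "\<dots> \<le> (SUP (\<pi>, \<sigma>)\<in>UNIV. dual1_guarantee W' M \<mu> q \<pi> \<sigma>)"
    using cSUP_upper[OF _ bdd_above_dual1_guarantee[OF W'], of "(\<pi>, \<sigma>')"] by simp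
  finally show "dual1_guarantee W M \<mu> q \<pi> \<sigma> \<le> (SUP (\<pi>, \<sigma>)\<in>UNIV. dual1_guarantee W' M \<mu> q \<pi> \<sigma>) + d + \<delta>"
    by simp
qed

lemma dual2_val_le_of_guarantees_within:
  assumes W: "evaluation W" and W': "evaluation W'" and within: "guarantees_within W W' M d"
  shows "dual2_val W M p \<nu> \<le> dual2_val W' M p \<nu> + d"
  unfolding dual2_val_eq[OF W] dual2_val_eq[OF W']
proof (rule field_le_epsilon, rule cSUP_least, simp)
  fix \<delta> :: real and \<sigma>
  assume "0 < \<delta>"
  then obtain \<sigma>' where \<sigma>': "\<And>l. guarantee W M (pmf p) \<sigma> l - (d + \<delta>) \<le> guarantee W' M (pmf p) \<sigma>' l"
    using guarantees_withinD[of W W' M d "pmf p" \<delta> \<sigma>] within by auto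
  have "dual2_guarantee W M p \<nu> \<sigma> - (d + \<delta>) \<le> \<nu> l + guarantee W' M (pmf p) \<sigma>' l" for l
    using dual2_guarantee_le[of W M p \<nu> \<sigma> l] \<sigma>'[of l] by linarith
  then have "dual2_guarantee W M p \<nu> \<sigma> - (d + \<delta>) \<le> dual2_guarantee W' M p \<nu> \<sigma>'"
    unfolding dual2_guarantee_def[of W'] by (intro Min.boundedI) auto
  also have "\<dots> \<le> (SUP \<sigma>. dual2_guarantee W' M p \<nu> \<sigma>)"
    by (rule cSUP_upper[OF UNIV_I bdd_above_dual2_guarantee[OF W']])
  finally show "dual2_guarantee W M p \<nu> \<sigma> \<le> (SUP \<sigma>. dual2_guarantee W' M p \<nu> \<sigma>) + d + \<delta>"
    by simp
qed

section \<open>Mixing behaviour strategies\<close>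

definition mix_pmf :: "real \<Rightarrow> 'a pmf \<Rightarrow> 'a pmf \<Rightarrow> 'a pmf" where
  "mix_pmf u p1 p2 = bernoulli_pmf u \<bind> (\<lambda>b. if b then p1 else p2)"

lemma pmf_mix_pmf: "0 \<le> u \<Longrightarrow> u \<le> 1 \<Longrightarrow> pmf (mix_pmf u p1 p2) x = u * pmf p1 x + (1 - u) * pmf p2 x"
  by (simp add: mix_pmf_def pmf_bind mult.commute)

text \<open>On actions of probability zero the posterior weight is irrelevant; it is set to \<open>u\<close>.\<close>

definition posterior_weight :: "real \<Rightarrow> 'a pmf \<Rightarrow> 'a pmf \<Rightarrow> 'a \<Rightarrow> real" where
  "posterior_weight u p1 p2 a =
     (if pmf (mix_pmf u p1 p2) a = 0 then u else u * pmf p1 a / pmf (mix_pmf u p1 p2) a)"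

lemma posterior_weight_bounds:
  assumes "0 \<le> u" and "u \<le> 1"
  shows "0 \<le> posterior_weight u p1 p2 a" and "posterior_weight u p1 p2 a \<le> 1"
proof -
  have "0 \<le> u * pmf p1 a" and "u * pmf p1 a \<le> pmf (mix_pmf u p1 p2) a"
    using assms by (simp_all add: pmf_mix_pmf)
  then show "0 \<le> posterior_weight u p1 p2 a" and "posterior_weight u p1 p2 a \<le> 1"
    using assms by (simp_all add: posterior_weight_def divide_le_eq)
qed

lemma pmf_mix_pmf_posterior_weight:
  assumes "0 \<le> u" and "u \<le> 1"
  shows "pmf (mix_pmf u p1 p2) a * posterior_weight u p1 p2 a = u * pmf p1 a"
    and "pmf (mix_pmf u p1 p2) a * (1 - posterior_weight u p1 p2 a) = (1 - u) * pmf p2 a"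
proof -
  have mix: "pmf (mix_pmf u p1 p2) a = u * pmf p1 a + (1 - u) * pmf p2 a"
    by (rule pmf_mix_pmf[OF assms])
  show first: "pmf (mix_pmf u p1 p2) a * posterior_weight u p1 p2 a = u * pmf p1 a"
  proof (cases "pmf (mix_pmf u p1 p2) a = 0")
    case True
    moreover have "0 \<le> u * pmf p1 a" and "0 \<le> (1 - u) * pmf p2 a"
      using assms by simp_all
    ultimately have "u * pmf p1 a = 0"
      using mix by linarith
    with True show ?thesis
      by simp
  qed (simp add: posterior_weight_def)
  show "pmf (mix_pmf u p1 p2) a * (1 - posterior_weight u p1 p2 a) = (1 - u) * pmf p2 a"
    using first mix by (simp add: right_diff_distrib)
qed

text \<open>Kuhn's construction: a single behaviour strategy that plays like \<open>s1\<close> with probability \<open>u\<close>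
  and like \<open>s2\<close> otherwise, the weight of \<open>s1\<close> being updated by Bayes' rule after each action.\<close>

fun mix_strategy ::
  "real \<Rightarrow> (('a \<times> 'b) list \<Rightarrow> 'a pmf) \<Rightarrow> (('a \<times> 'b) list \<Rightarrow> 'a pmf) \<Rightarrow> ('a \<times> 'b) list \<Rightarrow> 'a pmf" where
  "mix_strategy u s1 s2 [] = mix_pmf u (s1 []) (s2 [])"
| "mix_strategy u s1 s2 (x # h) =
     mix_strategy (posterior_weight u (s1 []) (s2 []) (fst x)) (continuation x s1) (continuation x s2) h"

lemma continuation_mix_strategy:
  "continuation x (mix_strategy u s1 s2) =
     mix_strategy (posterior_weight u (s1 []) (s2 []) (fst x)) (continuation x s1) (continuation x s2)"
  by (rule ext) (simp add: continuation_def)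

lemma stage_payoff_mix_strategy:
  fixes g :: "'a::finite \<Rightarrow> 'b::finite \<Rightarrow> real"
  assumes "0 \<le> u" and "u \<le> 1"
  shows "stage_payoff g (mix_strategy u s1 s2) t n = u * stage_payoff g s1 t n + (1 - u) * stage_payoff g s2 t n"
  using assms
proof (induction n arbitrary: u s1 s2 t)
  case 0
  then show ?case
    unfolding stage_payoff_0 sum_distrib_left sum.distrib[symmetric]
    by (intro sum.cong refl) (simp add: pmf_mix_pmf algebra_simps)
next
  case (Suc n)
  have "pmf (mix_strategy u s1 s2 []) (fst x) * pmf (t []) (snd x) *
          stage_payoff g (continuation x (mix_strategy u s1 s2)) (continuation x t) n
      = u * (pmf (s1 []) (fst x) * pmf (t []) (snd x) * stage_payoff g (continuation x s1) (continuation x t) n)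
        + (1 - u) * (pmf (s2 []) (fst x) * pmf (t []) (snd x) * stage_payoff g (continuation x s2) (continuation x t) n)"
    for x
  proof -
    let ?m = "pmf (mix_pmf u (s1 []) (s2 [])) (fst x)"
    let ?w = "posterior_weight u (s1 []) (s2 []) (fst x)"
    have "pmf (mix_strategy u s1 s2 []) (fst x) * pmf (t []) (snd x) *
            stage_payoff g (continuation x (mix_strategy u s1 s2)) (continuation x t) n
        = (?m * ?w) * (pmf (t []) (snd x) * stage_payoff g (continuation x s1) (continuation x t) n)
          + (?m * (1 - ?w)) * (pmf (t []) (snd x) * stage_payoff g (continuation x s2) (continuation x t) n)"
      by (simp add: continuation_mix_strategy Suc.IH[OF posterior_weight_bounds[OF Suc.prems]] algebra_simps)
    then show ?thesis
      unfolding pmf_mix_pmf_posterior_weight[OF Suc.prems] by (simp add: mult_ac)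
  qed
  then show ?case
    unfolding stage_payoff_Suc by (simp add: sum.distrib sum_distrib_left)
qed

lemma weighted_payoff_mix_strategy:
  fixes \<pi>1 \<pi>2 :: "'k::finite pmf"
  assumes W: "evaluation W" and "0 \<le> u" and "u \<le> 1"
  shows "weighted_payoff W M (pmf (mix_pmf u \<pi>1 \<pi>2))
           (\<lambda>k. mix_strategy (posterior_weight u \<pi>1 \<pi>2 k) (\<sigma>1 k) (\<sigma>2 k)) l t
       = u * weighted_payoff W M (pmf \<pi>1) \<sigma>1 l t + (1 - u) * weighted_payoff W M (pmf \<pi>2) \<sigma>2 l t"
proof -
  have "pmf (mix_pmf u \<pi>1 \<pi>2) k *
          W (stage_payoff (M k l) (mix_strategy (posterior_weight u \<pi>1 \<pi>2 k) (\<sigma>1 k) (\<sigma>2 k)) t)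
      = u * (pmf \<pi>1 k * W (stage_payoff (M k l) (\<sigma>1 k) t))
        + (1 - u) * (pmf \<pi>2 k * W (stage_payoff (M k l) (\<sigma>2 k) t))" for k
  proof -
    let ?w = "posterior_weight u \<pi>1 \<pi>2 k"
    have "stage_payoff (M k l) (mix_strategy ?w (\<sigma>1 k) (\<sigma>2 k)) t
        = (\<lambda>n. ?w * stage_payoff (M k l) (\<sigma>1 k) t n + (1 - ?w) * stage_payoff (M k l) (\<sigma>2 k) t n)"
      by (rule ext, rule stage_payoff_mix_strategy[OF posterior_weight_bounds[OF assms(2,3)]])
    then have W_mix: "W (stage_payoff (M k l) (mix_strategy ?w (\<sigma>1 k) (\<sigma>2 k)) t)
        = ?w * W (stage_payoff (M k l) (\<sigma>1 k) t) + (1 - ?w) * W (stage_payoff (M k l) (\<sigma>2 k) t)"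
      by (simp add: evaluation_add[OF W] evaluation_scale[OF W] Bseq_scale Bseq_stage_payoff)
    have "pmf (mix_pmf u \<pi>1 \<pi>2) k * W (stage_payoff (M k l) (mix_strategy ?w (\<sigma>1 k) (\<sigma>2 k)) t)
        = (pmf (mix_pmf u \<pi>1 \<pi>2) k * ?w) * W (stage_payoff (M k l) (\<sigma>1 k) t)
          + (pmf (mix_pmf u \<pi>1 \<pi>2) k * (1 - ?w)) * W (stage_payoff (M k l) (\<sigma>2 k) t)"
      unfolding W_mix by (simp add: algebra_simps)
    then show ?thesis
      unfolding pmf_mix_pmf_posterior_weight[OF assms(2,3)] by (simp add: mult_ac)
  qed
  then show ?thesis
    by (simp add: weighted_payoff_def sum.distrib sum_distrib_left)
qed

lemma guarantee_mix:
  assumes W: "evaluation W" and u: "0 \<le> u" "u \<le> 1"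
  shows "u * guarantee W M (pmf \<pi>1) \<sigma>1 l + (1 - u) * guarantee W M (pmf \<pi>2) \<sigma>2 l
     \<le> guarantee W M (pmf (mix_pmf u \<pi>1 \<pi>2)) (\<lambda>k. mix_strategy (posterior_weight u \<pi>1 \<pi>2 k) (\<sigma>1 k) (\<sigma>2 k)) l"
proof (rule le_guarantee)
  fix t
  show "u * guarantee W M (pmf \<pi>1) \<sigma>1 l + (1 - u) * guarantee W M (pmf \<pi>2) \<sigma>2 l
     \<le> weighted_payoff W M (pmf (mix_pmf u \<pi>1 \<pi>2)) (\<lambda>k. mix_strategy (posterior_weight u \<pi>1 \<pi>2 k) (\<sigma>1 k) (\<sigma>2 k)) l t"
    unfolding weighted_payoff_mix_strategy[OF W u] using u
    by (intro add_mono mult_left_mono guarantee_le_weighted_payoff[OF W]) auto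
qed

section \<open>Separation from the set of guaranteed vectors\<close>

lemma inner_real_vec: "inner a x = (\<Sum>l\<in>UNIV. a $ l * x $ l)"
  for a x :: "real ^ 'n"
  by (simp add: inner_vec_def)

lemma nonpos_vector_as_pmf:
  fixes a :: "real ^ 'l"
  assumes nonpos: "\<And>l. a $ l \<le> 0" and "a \<noteq> 0"
  obtains Q N where "0 < N" and "\<And>x. (\<Sum>l\<in>UNIV. pmf Q l * x $ l) = - inner a x / N"
proof -
  define N where "N = (\<Sum>l\<in>UNIV. - a $ l)"
  have "0 \<le> N" and "N \<noteq> 0"
    using nonpos \<open>a \<noteq> 0\<close> by (auto simp: N_def sum_nonneg sum_nonneg_eq_0_iff vec_eq_iff)
  then have "0 < N"
    by simp
  have "pmf (embed_pmf (\<lambda>l. - a $ l / N)) = (\<lambda>l. - a $ l / N)"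
  proof (rule pmf_embed_pmf_finite)
    show "0 \<le> - a $ l / N" for l
      using nonpos[of l] \<open>0 < N\<close> by (simp add: divide_nonpos_pos)
    show "(\<Sum>l\<in>UNIV. - a $ l / N) = 1"
      unfolding sum_divide_distrib[symmetric] N_def[symmetric] using \<open>0 < N\<close> by simp
  qed
  then have "(\<Sum>l\<in>UNIV. pmf (embed_pmf (\<lambda>l. - a $ l / N)) l * x $ l) = - inner a x / N" for x
    by (simp add: inner_real_vec sum_divide_distrib sum_negf)
  with \<open>0 < N\<close> show ?thesis
    by (rule that)
qed

lemma separation_lower_set:
  fixes C :: "('v::euclidean_space \<times> (real ^ 'l)) set"
  assumes conv: "convex C"
    and lower: "\<And>w z z'. (w, z) \<in> C \<Longrightarrow> (\<And>l. z' $ l \<le> z $ l) \<Longrightarrow> (w, z') \<in> C"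
    and x: "(v, x) \<in> C" and y: "(v, y) \<notin> closure C"
  obtains a Q c where "\<And>w z. (w, z) \<in> C \<Longrightarrow> inner a w + (\<Sum>l\<in>UNIV. pmf Q l * z $ l) \<le> c"
    and "c < inner a v + (\<Sum>l\<in>UNIV. pmf Q l * y $ l)"
proof -
  obtain a b where sep_y: "inner a (v, y) < b" and sep_C: "\<forall>z\<in>closure C. b < inner a z"
    using separating_hyperplane_closed_point[OF convex_closure[OF conv] closed_closure y] by blast
  obtain a1 a2 where a: "a = (a1, a2)"
    by (cases a)
  have sep: "b < inner a1 w + inner a2 z" if "(w, z) \<in> C" for w z
    using sep_C closure_subset that by (force simp: a)
  have a2_nonpos: "a2 $ l \<le> 0" for l
  proof (rule ccontr)
    assume "\<not> a2 $ l \<le> 0"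
    define s where "s = (inner a1 v + inner a2 x - b) / a2 $ l"
    have "0 \<le> s"
      using sep[OF x] \<open>\<not> a2 $ l \<le> 0\<close> by (simp add: s_def)
    then have "(v, x - s *\<^sub>R axis l 1) \<in> C"
      by (intro lower[OF x]) (simp add: axis_def)
    from sep[OF this] show False
      using \<open>\<not> a2 $ l \<le> 0\<close> by (simp add: inner_diff_right inner_axis s_def)
  qed
  have "a2 \<noteq> 0"
    using sep[OF x] sep_y by (auto simp: a)
  then obtain Q N where "0 < N" and Q: "\<And>z. (\<Sum>l\<in>UNIV. pmf Q l * z $ l) = - inner a2 z / N"
    using nonpos_vector_as_pmf[OF a2_nonpos] by blast
  show ?thesis
  proof (rule that[of "- (1 / N) *\<^sub>R a1" Q "- b / N"])
    show "inner (- (1 / N) *\<^sub>R a1) w + (\<Sum>l\<in>UNIV. pmf Q l * z $ l) \<le> - b / N" if "(w, z) \<in> C" for w z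
      using sep[OF that] \<open>0 < N\<close> by (simp add: Q divide_simps)
    show "- b / N < inner (- (1 / N) *\<^sub>R a1) v + (\<Sum>l\<in>UNIV. pmf Q l * y $ l)"
      using sep_y \<open>0 < N\<close> by (simp add: Q a divide_simps)
  qed
qed

definition pmf_vec :: "'k::finite pmf \<Rightarrow> real ^ 'k" where
  "pmf_vec p = (\<chi> k. pmf p k)"

lemma inner_pmf_vec: "inner a (pmf_vec p) = (\<Sum>k\<in>UNIV. pmf p k * a $ k)"
  by (simp add: inner_real_vec pmf_vec_def mult.commute)

definition guarantee_set ::
  "((nat \<Rightarrow> real) \<Rightarrow> real) \<Rightarrow> ('k::finite \<Rightarrow> 'l::finite \<Rightarrow> 'a::finite \<Rightarrow> 'b::finite \<Rightarrow> real)
   \<Rightarrow> ((real ^ 'k) \<times> (real ^ 'l)) set" where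
  "guarantee_set W M = {(pmf_vec \<pi>, x) | \<pi> \<sigma> x. \<forall>l. x $ l \<le> guarantee W M (pmf \<pi>) \<sigma> l}"

lemma guarantee_in_guarantee_set: "(pmf_vec \<pi>, \<chi> l. guarantee W M (pmf \<pi>) \<sigma> l) \<in> guarantee_set W M"
  by (auto simp: guarantee_set_def)

lemma guarantee_set_lower:
  "(v, x) \<in> guarantee_set W M \<Longrightarrow> (\<And>l. x' $ l \<le> x $ l) \<Longrightarrow> (v, x') \<in> guarantee_set W M"
  unfolding guarantee_set_def by (blast intro: order_trans)

lemma convex_guarantee_set:
  assumes W: "evaluation W"
  shows "convex (guarantee_set W M)"
proof (rule convexI)
  fix z1 z2 and u v :: real
  assume "z1 \<in> guarantee_set W M" and "z2 \<in> guarantee_set W M" and "0 \<le> u" "0 \<le> v" "u + v = 1"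
  then have u: "0 \<le> u" "u \<le> 1" and v: "v = 1 - u"
    by auto
  obtain \<pi>1 \<sigma>1 x1 where z1: "z1 = (pmf_vec \<pi>1, x1)" and x1: "\<And>l. x1 $ l \<le> guarantee W M (pmf \<pi>1) \<sigma>1 l"
    using \<open>z1 \<in> guarantee_set W M\<close> unfolding guarantee_set_def by blast
  obtain \<pi>2 \<sigma>2 x2 where z2: "z2 = (pmf_vec \<pi>2, x2)" and x2: "\<And>l. x2 $ l \<le> guarantee W M (pmf \<pi>2) \<sigma>2 l"
    using \<open>z2 \<in> guarantee_set W M\<close> unfolding guarantee_set_def by blast
  let ?\<sigma> = "\<lambda>k. mix_strategy (posterior_weight u \<pi>1 \<pi>2 k) (\<sigma>1 k) (\<sigma>2 k)"
  have "u *\<^sub>R pmf_vec \<pi>1 + v *\<^sub>R pmf_vec \<pi>2 = pmf_vec (mix_pmf u \<pi>1 \<pi>2)"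
    by (simp add: pmf_vec_def vec_eq_iff pmf_mix_pmf[OF u] v)
  moreover have "(u *\<^sub>R x1 + v *\<^sub>R x2) $ l \<le> guarantee W M (pmf (mix_pmf u \<pi>1 \<pi>2)) ?\<sigma> l" for l
  proof -
    have "(u *\<^sub>R x1 + v *\<^sub>R x2) $ l \<le> u * guarantee W M (pmf \<pi>1) \<sigma>1 l + (1 - u) * guarantee W M (pmf \<pi>2) \<sigma>2 l"
      using x1[of l] x2[of l] u by (simp add: v add_mono mult_left_mono)
    also have "\<dots> \<le> guarantee W M (pmf (mix_pmf u \<pi>1 \<pi>2)) ?\<sigma> l"
      by (rule guarantee_mix[OF W u])
    finally show ?thesis .
  qed
  ultimately show "u *\<^sub>R z1 + v *\<^sub>R z2 \<in> guarantee_set W M"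
    unfolding guarantee_set_def z1 z2 by force
qed

lemma guarantee_approx_of_closure:
  fixes M :: "'k::finite \<Rightarrow> 'l::finite \<Rightarrow> 'a::finite \<Rightarrow> 'b::finite \<Rightarrow> real"
  assumes W: "evaluation W" and y: "(pmf_vec \<pi>, y) \<in> closure (guarantee_set W M)" and "0 < \<delta>"
  shows "\<exists>\<sigma>. \<forall>l. y $ l - \<delta> \<le> guarantee W M (pmf \<pi>) \<sigma> l"
proof -
  define r where "r = \<delta> / (1 + CARD('k) * payoff_bound M)"
  have den: "0 < 1 + CARD('k) * payoff_bound M"
    by (simp add: add_pos_nonneg payoff_bound_nonneg)
  then have "0 < r"
    using \<open>0 < \<delta>\<close> by (simp add: r_def)
  have "r * (1 + CARD('k) * payoff_bound M) = \<delta>"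
    using den by (simp add: r_def)
  then have r: "r + CARD('k) * r * payoff_bound M = \<delta>"
    by (simp add: algebra_simps)
  obtain z where "z \<in> guarantee_set W M" and "dist z (pmf_vec \<pi>, y) < r"
    using y \<open>0 < r\<close> unfolding closure_approachable by blast
  then obtain \<pi>1 \<sigma>1 x1 where z: "z = (pmf_vec \<pi>1, x1)" and x1: "\<And>l. x1 $ l \<le> guarantee W M (pmf \<pi>1) \<sigma>1 l"
    and "dist z (pmf_vec \<pi>, y) < r"
    unfolding guarantee_set_def by blast
  then have close: "dist (pmf_vec \<pi>1) (pmf_vec \<pi>) < r" "dist x1 y < r"
    using dist_fst_le[of z "(pmf_vec \<pi>, y)"] dist_snd_le[of z "(pmf_vec \<pi>, y)"] by simp_all
  have "\<bar>pmf \<pi> k - pmf \<pi>1 k\<bar> \<le> r" for k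
    using dist_vec_nth_le[of "pmf_vec \<pi>1" k "pmf_vec \<pi>"] close(1) by (simp add: pmf_vec_def dist_real_def)
  then have "(\<Sum>k\<in>UNIV. \<bar>pmf \<pi> k - pmf \<pi>1 k\<bar>) * payoff_bound M \<le> CARD('k) * r * payoff_bound M"
    using sum_mono[of UNIV "\<lambda>k. \<bar>pmf \<pi> k - pmf \<pi>1 k\<bar>" "\<lambda>_. r"] payoff_bound_nonneg[of M]
    by (intro mult_right_mono) auto
  moreover have near: "y $ l - r \<le> x1 $ l" for l
    using dist_vec_nth_le[of x1 l y] close(2) by (simp add: dist_real_def)
  ultimately have "y $ l - \<delta> \<le> guarantee W M (pmf \<pi>) \<sigma>1 l" for l
    using guarantee_lipschitz[OF W, of M "pmf \<pi>1" \<sigma>1 l "pmf \<pi>"] x1[of l] near[of l] r by linarith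
  then show ?thesis
    by blast
qed

lemma separate_from_guarantee_set:
  assumes W: "evaluation W" and y: "(pmf_vec \<pi>, y) \<notin> closure (guarantee_set W M)"
  obtains a Q c where "\<And>v x. (v, x) \<in> guarantee_set W M \<Longrightarrow> inner a v + (\<Sum>l\<in>UNIV. pmf Q l * x $ l) \<le> c"
    and "c < inner a (pmf_vec \<pi>) + (\<Sum>l\<in>UNIV. pmf Q l * y $ l)"
proof (rule separation_lower_set[where C = "guarantee_set W M" and v = "pmf_vec \<pi>" and y = y])
  show "convex (guarantee_set W M)"
    by (rule convex_guarantee_set[OF W])
  show "(v, x') \<in> guarantee_set W M" if "(v, x) \<in> guarantee_set W M" and "\<And>l. x' $ l \<le> x $ l" for v x x'
    using that by (rule guarantee_set_lower)
  show "(pmf_vec \<pi>, \<chi> l. guarantee W M (pmf \<pi>) undefined l) \<in> guarantee_set W M"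
    by (rule guarantee_in_guarantee_set)
qed (use y that in auto)

lemma closure_guarantee_set_of_dual1_val_le:
  fixes M :: "'k::finite \<Rightarrow> 'l::finite \<Rightarrow> 'a::finite \<Rightarrow> 'b::finite \<Rightarrow> real"
  assumes U: "evaluation U" and U': "evaluation U'"
    and le: "\<And>\<mu> q. dual1_val U M \<mu> q \<le> dual1_val U' M \<mu> q + e" and "0 < \<delta>"
  shows "(pmf_vec \<pi>, \<chi> l. guarantee U M (pmf \<pi>) \<sigma> l - (e + \<delta>)) \<in> closure (guarantee_set U' M)"
proof (rule ccontr)
  let ?y = "\<chi> l. guarantee U M (pmf \<pi>) \<sigma> l - (e + \<delta>)"
  assume outside: "(pmf_vec \<pi>, ?y) \<notin> closure (guarantee_set U' M)"
  obtain a Q c where sep: "\<And>v x. (v, x) \<in> guarantee_set U' M \<Longrightarrow> inner a v + (\<Sum>l\<in>UNIV. pmf Q l * x $ l) \<le> c"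
    and gap: "c < inner a (pmf_vec \<pi>) + (\<Sum>l\<in>UNIV. pmf Q l * ?y $ l)"
    using separate_from_guarantee_set[OF U' outside] by blast
  \<comment> \<open>the separating functional is a parameter of the dual game\<close>
  define \<mu> where "\<mu> k = a $ k" for k
  have "dual1_val U' M \<mu> Q \<le> c"
    unfolding dual1_val_eq[OF U']
  proof (rule cSUP_least, simp, clarify)
    fix \<pi>' \<sigma>'
    have "dual1_guarantee U' M \<mu> Q \<pi>' \<sigma>'
        = inner a (pmf_vec \<pi>') + (\<Sum>l\<in>UNIV. pmf Q l * (\<chi> l. guarantee U' M (pmf \<pi>') \<sigma>' l) $ l)"
      by (simp add: dual1_guarantee_def inner_pmf_vec \<mu>_def)
    also have "\<dots> \<le> c"
      by (rule sep[OF guarantee_in_guarantee_set])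
    finally show "dual1_guarantee U' M \<mu> Q \<pi>' \<sigma>' \<le> c" .
  qed
  moreover have "c + (e + \<delta>) < dual1_val U M \<mu> Q"
  proof -
    have "c + (e + \<delta>) < inner a (pmf_vec \<pi>) + (\<Sum>l\<in>UNIV. pmf Q l * ?y $ l) + (e + \<delta>)"
      using gap by simp
    also have "\<dots> = dual1_guarantee U M \<mu> Q \<pi> \<sigma>"
      by (simp add: dual1_guarantee_def inner_pmf_vec \<mu>_def right_diff_distrib sum_subtractf
          sum_distrib_right[symmetric])
    also have "\<dots> \<le> dual1_val U M \<mu> Q"
      unfolding dual1_val_eq[OF U] using cSUP_upper[OF _ bdd_above_dual1_guarantee[OF U], of "(\<pi>, \<sigma>)"] by simp
    finally show ?thesis .
  qed
  ultimately show False
    using le[of \<mu> Q] \<open>0 < \<delta>\<close> by linarith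
qed

lemma closure_guarantee_set_of_dual2_val_le:
  fixes M :: "'k::finite \<Rightarrow> 'l::finite \<Rightarrow> 'a::finite \<Rightarrow> 'b::finite \<Rightarrow> real"
  assumes U: "evaluation U" and U': "evaluation U'"
    and le: "\<And>p \<nu>. dual2_val U M p \<nu> \<le> dual2_val U' M p \<nu> + e" and "0 < \<delta>"
  shows "(pmf_vec \<pi>, \<chi> l. guarantee U M (pmf \<pi>) \<sigma> l - (e + \<delta>)) \<in> closure (guarantee_set U' M)"
proof (rule ccontr)
  let ?y = "\<chi> l. guarantee U M (pmf \<pi>) \<sigma> l - (e + \<delta>)"
  assume outside: "(pmf_vec \<pi>, ?y) \<notin> closure (guarantee_set U' M)"
  obtain a Q c where sep: "\<And>v x. (v, x) \<in> guarantee_set U' M \<Longrightarrow> inner a v + (\<Sum>l\<in>UNIV. pmf Q l * x $ l) \<le> c"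
    and gap: "c < inner a (pmf_vec \<pi>) + (\<Sum>l\<in>UNIV. pmf Q l * ?y $ l)"
    using separate_from_guarantee_set[OF U' outside] by blast
  \<comment> \<open>chosen so that \<open>\<sigma>\<close> guarantees exactly \<open>e + \<delta>\<close> under \<open>U\<close>\<close>
  define \<nu> where "\<nu> l = e + \<delta> - guarantee U M (pmf \<pi>) \<sigma> l" for l
  define K where "K = c - inner a (pmf_vec \<pi>) + (\<Sum>l\<in>UNIV. pmf Q l * \<nu> l)"
  have "(\<Sum>l\<in>UNIV. pmf Q l * ?y $ l) = - (\<Sum>l\<in>UNIV. pmf Q l * \<nu> l)"
    by (simp add: \<nu>_def sum_negf[symmetric] algebra_simps)
  then have "K < 0"
    using gap by (simp add: K_def)
  have "dual2_val U' M \<pi> \<nu> \<le> K"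
    unfolding dual2_val_eq[OF U']
  proof (rule cSUP_least, simp)
    fix \<sigma>'
    have "dual2_guarantee U' M \<pi> \<nu> \<sigma>'
        \<le> (\<Sum>l\<in>UNIV. pmf Q l * \<nu> l) + (\<Sum>l\<in>UNIV. pmf Q l * (\<chi> l. guarantee U' M (pmf \<pi>) \<sigma>' l) $ l)"
      using dual2_guarantee_le_expectation[of U' M \<pi> \<nu> \<sigma>' Q] by (simp add: distrib_left sum.distrib)
    also have "\<dots> \<le> K"
      using sep[OF guarantee_in_guarantee_set[of \<pi> U' M \<sigma>']] by (simp add: K_def)
    finally show "dual2_guarantee U' M \<pi> \<nu> \<sigma>' \<le> K" .
  qed
  moreover have "e + \<delta> \<le> dual2_val U M \<pi> \<nu>"
  proof -
    have "dual2_guarantee U M \<pi> \<nu> \<sigma> = e + \<delta>"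
      by (simp add: dual2_guarantee_def \<nu>_def)
    with cSUP_upper[OF UNIV_I bdd_above_dual2_guarantee[OF U]] show ?thesis
      unfolding dual2_val_eq[OF U] by metis
  qed
  ultimately show False
    using le[of \<pi> \<nu>] \<open>K < 0\<close> \<open>0 < \<delta>\<close> by linarith
qed

lemma guarantees_within_of_closure:
  fixes M :: "'k::finite \<Rightarrow> 'l::finite \<Rightarrow> 'a::finite \<Rightarrow> 'b::finite \<Rightarrow> real"
  assumes U: "evaluation U" and U': "evaluation U'"
    and closure: "\<And>\<pi> \<sigma> \<delta>. 0 < \<delta> \<Longrightarrow>
           (pmf_vec \<pi>, \<chi> l. guarantee U M (pmf \<pi>) \<sigma> l - (e + \<delta>)) \<in> closure (guarantee_set U' M)"
  shows "guarantees_within U U' M e"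
proof (rule guarantees_within_of_pmf_weights[OF U U'])
  fix \<pi> \<sigma> and \<delta> :: real
  assume "0 < \<delta>"
  then have "0 < \<delta> / 2"
    by simp
  from guarantee_approx_of_closure[OF U' closure[OF this] this]
  show "\<exists>\<sigma>'. \<forall>l. guarantee U M (pmf \<pi>) \<sigma> l - (e + \<delta>) \<le> guarantee U' M (pmf \<pi>) \<sigma>' l"
    by (simp add: algebra_simps)
qed

section \<open>Contraction of the value differences\<close>

lemma dual1_val_contraction:
  fixes M :: "'k::finite \<Rightarrow> 'l::finite \<Rightarrow> 'a::finite \<Rightarrow> 'b::finite \<Rightarrow> real"
  assumes U: "evaluation U" and U': "evaluation U'" and W: "evaluation W" and W': "evaluation W'"
    and rec: "evaluation_recursion lam W U" and rec': "evaluation_recursion lam W' U'"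
    and lam: "0 \<le> lam" "lam \<le> 1"
    and le: "\<And>\<mu> q. dual1_val U M \<mu> q \<le> dual1_val U' M \<mu> q + e"
  shows "dual1_val W M \<mu> q \<le> dual1_val W' M \<mu> q + (1 - lam) * e"
proof -
  have "guarantees_within U U' M e"
    by (intro guarantees_within_of_closure[OF U U'] closure_guarantee_set_of_dual1_val_le[OF U U' le])
  then have "guarantees_within W W' M ((1 - lam) * e)"
    by (rule guarantees_within_contraction[OF U U' W rec rec' lam])
  then show ?thesis
    by (rule dual1_val_le_of_guarantees_within[OF W W'])
qed

lemma dual2_val_contraction:
  fixes M :: "'k::finite \<Rightarrow> 'l::finite \<Rightarrow> 'a::finite \<Rightarrow> 'b::finite \<Rightarrow> real"
  assumes U: "evaluation U" and U': "evaluation U'" and W: "evaluation W" and W': "evaluation W'"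
    and rec: "evaluation_recursion lam W U" and rec': "evaluation_recursion lam W' U'"
    and lam: "0 \<le> lam" "lam \<le> 1"
    and le: "\<And>p \<nu>. dual2_val U M p \<nu> \<le> dual2_val U' M p \<nu> + e"
  shows "dual2_val W M p \<nu> \<le> dual2_val W' M p \<nu> + (1 - lam) * e"
proof -
  have "guarantees_within U U' M e"
    by (intro guarantees_within_of_closure[OF U U'] closure_guarantee_set_of_dual2_val_le[OF U U' le])
  then have "guarantees_within W W' M ((1 - lam) * e)"
    by (rule guarantees_within_contraction[OF U U' W rec rec' lam])
  then show ?thesis
    by (rule dual2_val_le_of_guarantees_within[OF W W'])
qed

lemma abs_dual1_val_diff_le:
  assumes "evaluation W" and "evaluation W'"
  shows "\<bar>dual1_val W M \<mu> q - dual1_val W' M \<mu> q\<bar> \<le> 2 * payoff_bound M"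
  using dual1_val_le_of_guarantees_within[OF assms guarantees_within_twice_payoff_bound[OF assms], where M = M and \<mu> = \<mu> and q = q]
    dual1_val_le_of_guarantees_within[OF assms(2,1) guarantees_within_twice_payoff_bound[OF assms(2,1)], where M = M and \<mu> = \<mu> and q = q]
  by (simp add: abs_le_iff)

lemma abs_dual2_val_diff_le:
  assumes "evaluation W" and "evaluation W'"
  shows "\<bar>dual2_val W M p \<nu> - dual2_val W' M p \<nu>\<bar> \<le> 2 * payoff_bound M"
  using dual2_val_le_of_guarantees_within[OF assms guarantees_within_twice_payoff_bound[OF assms], where M = M and p = p and \<nu> = \<nu>]
    dual2_val_le_of_guarantees_within[OF assms(2,1) guarantees_within_twice_payoff_bound[OF assms(2,1)], where M = M and p = p and \<nu> = \<nu>]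
  by (simp add: abs_le_iff)

lemma supnorm_diff_le:
  fixes F F' G G' :: "'x \<Rightarrow> 'y \<Rightarrow> real"
  assumes bounded: "\<And>x y. \<bar>F x y - F' x y\<bar> \<le> B"
    and le: "\<And>e x y. (\<And>x y. F x y \<le> F' x y + e) \<Longrightarrow> G x y \<le> G' x y + c * e"
    and ge: "\<And>e x y. (\<And>x y. F' x y \<le> F x y + e) \<Longrightarrow> G' x y \<le> G x y + c * e"
  shows "supnorm (\<lambda>x y. G x y - G' x y) \<le> c * supnorm (\<lambda>x y. F x y - F' x y)"
proof -
  define e where "e = supnorm (\<lambda>x y. F x y - F' x y)"
  have bdd: "bdd_above ((\<lambda>(x, y). \<bar>F x y - F' x y\<bar>) ` UNIV)"
    by (rule bdd_aboveI2[where M = B]) (simp add: bounded split: prod.split)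
  have F_diff: "\<bar>F x y - F' x y\<bar> \<le> e" for x y
    using cSUP_upper[OF UNIV_I bdd, where x = "(x, y)"] by (simp add: e_def supnorm_def)
  have F_le: "F x y \<le> F' x y + e" and F_ge: "F' x y \<le> F x y + e" for x y
    using F_diff[of x y] by (simp_all add: abs_le_iff)
  have "\<bar>G x y - G' x y\<bar> \<le> c * e" for x y
    using le[OF F_le, of x y] ge[OF F_ge, of x y] by (simp add: abs_le_iff)
  then show ?thesis
    unfolding e_def[symmetric] supnorm_def by (intro cSUP_least) (simp_all split: prod.split)
qed

lemma dual1_val_supnorm_contraction:
  fixes M :: "'k::finite \<Rightarrow> 'l::finite \<Rightarrow> 'a::finite \<Rightarrow> 'b::finite \<Rightarrow> real"
  assumes U: "evaluation U" and U': "evaluation U'" and W: "evaluation W" and W': "evaluation W'"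
    and rec: "evaluation_recursion lam W U" and rec': "evaluation_recursion lam W' U'"
    and lam: "0 \<le> lam" "lam \<le> 1"
  shows "supnorm (\<lambda>\<mu> q. dual1_val W M \<mu> q - dual1_val W' M \<mu> q)
           \<le> (1 - lam) * supnorm (\<lambda>\<mu> q. dual1_val U M \<mu> q - dual1_val U' M \<mu> q)"
proof (rule supnorm_diff_le)
  show "\<bar>dual1_val U M \<mu> q - dual1_val U' M \<mu> q\<bar> \<le> 2 * payoff_bound M" for \<mu> q
    by (rule abs_dual1_val_diff_le[OF U U'])
  show "dual1_val W M \<mu> q \<le> dual1_val W' M \<mu> q + (1 - lam) * e"
    if "\<And>\<mu> q. dual1_val U M \<mu> q \<le> dual1_val U' M \<mu> q + e" for e \<mu> q
    using that by (rule dual1_val_contraction[OF U U' W W' rec rec' lam])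
  show "dual1_val W' M \<mu> q \<le> dual1_val W M \<mu> q + (1 - lam) * e"
    if "\<And>\<mu> q. dual1_val U' M \<mu> q \<le> dual1_val U M \<mu> q + e" for e \<mu> q
    using that by (rule dual1_val_contraction[OF U' U W' W rec' rec lam])
qed

lemma dual2_val_supnorm_contraction:
  fixes M :: "'k::finite \<Rightarrow> 'l::finite \<Rightarrow> 'a::finite \<Rightarrow> 'b::finite \<Rightarrow> real"
  assumes U: "evaluation U" and U': "evaluation U'" and W: "evaluation W" and W': "evaluation W'"
    and rec: "evaluation_recursion lam W U" and rec': "evaluation_recursion lam W' U'"
    and lam: "0 \<le> lam" "lam \<le> 1"
  shows "supnorm (\<lambda>p \<nu>. dual2_val W M p \<nu> - dual2_val W' M p \<nu>)
           \<le> (1 - lam) * supnorm (\<lambda>p \<nu>. dual2_val U M p \<nu> - dual2_val U' M p \<nu>)"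
proof (rule supnorm_diff_le)
  show "\<bar>dual2_val U M p \<nu> - dual2_val U' M p \<nu>\<bar> \<le> 2 * payoff_bound M" for p \<nu>
    by (rule abs_dual2_val_diff_le[OF U U'])
  show "dual2_val W M p \<nu> \<le> dual2_val W' M p \<nu> + (1 - lam) * e"
    if "\<And>p \<nu>. dual2_val U M p \<nu> \<le> dual2_val U' M p \<nu> + e" for e p \<nu>
    using that by (rule dual2_val_contraction[OF U U' W W' rec rec' lam])
  show "dual2_val W' M p \<nu> \<le> dual2_val W M p \<nu> + (1 - lam) * e"
    if "\<And>p \<nu>. dual2_val U' M p \<nu> \<le> dual2_val U M p \<nu> + e" for e p \<nu>
    using that by (rule dual2_val_contraction[OF U' U W' W rec' rec lam])
qed

theorem theorem4:
  fixes M :: "'k::finite \<Rightarrow> 'l::finite \<Rightarrow> 'a::finite \<Rightarrow> 'b::finite \<Rightarrow> real"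
    and lam :: real and T :: nat
  assumes "0 < lam" and "lam < 1"
  shows "supnorm (\<lambda>\<mu> q. V1 lam M \<mu> q - V1T lam (T + 1) M \<mu> q)
           \<le> (1 - lam) * supnorm (\<lambda>\<mu> q. V1 lam M \<mu> q - V1T lam T M \<mu> q)
       \<and> supnorm (\<lambda>p \<nu>. V2 lam M p \<nu> - V2T lam (T + 1) M p \<nu>)
           \<le> (1 - lam) * supnorm (\<lambda>p \<nu>. V2 lam M p \<nu> - V2T lam T M p \<nu>)"
proof -
  have disc: "evaluation (disc_total lam)" and trunc: "evaluation (trunc_total lam T')" for T'
    using assms by (simp_all add: evaluation_disc_total evaluation_trunc_total)
  have rec: "evaluation_recursion lam (disc_total lam) (disc_total lam)"
    and rec': "evaluation_recursion lam (trunc_total lam (T + 1)) (trunc_total lam T)"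
    using assms evaluation_recursion_disc_total evaluation_recursion_trunc_total[of lam T] by simp_all
  have lam: "0 \<le> lam" "lam \<le> 1"
    using assms by simp_all
  show ?thesis
    unfolding V1_def V1T_def V2_def V2T_def
    using dual1_val_supnorm_contraction[OF disc trunc disc trunc rec rec' lam, of M]
      dual2_val_supnorm_contraction[OF disc trunc disc trunc rec rec' lam, of M]
    by simp
qed

end
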